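(* Consider the following double-loop method (inexact accelerated proximal gradient) for minimizing $F(x)=f(x)+\omega(Ax)$, where $f:\mathbb R^n\to\mathbb R$ is convex, differentiable and $L$-Lipschitz smooth, $A\in\mathbb R^{m\times n}$, $\omega:\mathbb R^m\to\mathbb R$ is convex and globally $K_\omega$-Lipschitz, and $F$ has a minimizer $\bar x$. Parameters: $\mathcal E_0>0$, $p>1$, sequences $B_k>0$, $\rho_k\ge0$ with $L_k=B_k+\rho_k\in[L_{\min},L_{\max}]$ for constants $0<L_{\min}\le L_{\max}$; $\alpha_0=1$ and for $k\ge1$, $\alpha_k\in(0,1]$ with $1-\alpha_k=\alpha_k^2L_k/(\alpha_{k-1}^2L_{k-1})$; $\beta_0=1$, $\beta_k=\prod_{i=1}^k\max\big(1-\alpha_i,\frac{\alpha_i^2L_i}{\alpha_{i-1}^2L_{i-1}}\big)$. Initial points $x_{-1},x^\circ_{-1}\in\mathbb R^n$. Outer iteration $k\ge0$: $y_k=\alpha_kx^\circ_{k-1}+(1-\alpha_k)x_{k-1}$; $\lambda_k=L_k^{-1}$; $\tilde y_k=y_k-L_k^{-1}\nabla f(y_k)$. Inner loop: with $\Phi_k(u)=\omega(Au)+\frac1{2\lambda_k}\|u-\tilde y_k\|^2$, $\Psi_k(v)=\frac1{2\lambda_k}\|\lambda_kA^\top v-\tilde y_k\|^2+\omega^\star(v)-\frac1{2\lambda_k}\|\tilde y_k\|^2$ and $\mathbf G_k(u,v)=\Phi_k(u)+\Psi_k(v)$, start from some $v_0\in\operatorname{dom}\omega^\star$ and for $j\ge0$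 set $v_{j+1}=\operatorname{prox}_{\tau_j^{-1}\omega^\star}\big(v_j-\tau_j^{-1}A(\lambda_kA^\top v_j-\tilde y_k)\big)$ with $\tau_j>0$ satisfying $\frac{\lambda_k}2\|A^\top(v_{j+1}-v_j)\|^2\le\frac{\tau_j}2\|v_{j+1}-v_j\|^2$, and $z_j=\tilde y_k-\lambda_kA^\top v_j$. Let $J_k$ be the smallest $j$ with $\mathbf G_k(z_j,v_j)\le\epsilon_k$, where $\epsilon_0=\mathcal E_0$ and for $k\ge1$ $\epsilon_k=\mathcal E_0\beta_kk^{-p}+\frac{\rho_k}2\|z_j-y_k\|^2$; set $x_k=z_{J_k}$ (with this $\epsilon_k$). The sequences are such that $f(x_k)-f(y_k)-\langle\nabla f(y_k),x_k-y_k\rangle\le\frac{B_k}2\|x_k-y_k\|^2$. Finally $x^\circ_k=x_{k-1}+\alpha_k^{-1}(x_k-x_{k-1})$. Assume moreover: for each $k$, $\Psi_k$ has a nonempty set of minimizers and satisfies quadratic growth with a constant $\kappa_k$, where $\inf_k\kappa_k>\kappa_{\min}$ for some $\kappa_{\min}>0$; and all inner step parameters satisfy $\sup_{k,j}\tau_j^{(k)}\le\bar\tau_{\max}<\infty$. Count one call to $\nabla f$ per outer iteration and one call to $\operatorname{prox}_{\cdot\,\omega^\star}$ per inner iteration, so that the total number of such calls through outer iteration $k$ is $\sum_{l=0}^k(J_l+1)$. Then there exist constants $C,\varepsilon_1>0$ (independent of $\varepsilon$) such that for every $\varepsilon\in(0,\varepsilon_1]$: (i) there exists $k\ge0$ with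 $F(x_k)-F(\bar x)\le\varepsilon$ and $\sum_{l=0}^k(J_l+1)\le C\varepsilon^{-1/2}\ln(1/\varepsilon)$, i.e. the total number of calls is $\mathcal O(\varepsilon^{-1/2}\ln(\varepsilon^{-1}))$; (ii) there exists $k\ge0$ with $\operatorname{dist}(\mathbf 0\,|\,\partial_{\epsilon_k}F(x_k))\le\varepsilon$ and $\sum_{l=0}^k(J_l+1)\le C\varepsilon^{-1}\ln(1/\varepsilon)$, i.e. the total number of calls is $\mathcal O(\varepsilon^{-1}\ln(\varepsilon^{-1}))$.
   Context: $\omega^\star$ is the Fenchel conjugate of $\omega$; $\operatorname{prox}_{\mu h}(x)=\operatorname{argmin}_z\{h(z)+\frac1{2\mu}\|z-x\|^2\}$. $L$-Lipschitz smooth: $f(u)-f(w)-\langle\nabla f(w),u-w\rangle\le\frac L2\|u-w\|^2$. A function $\Psi$ with nonempty minimizer set $S$ satisfies quadratic growth with constant $\kappa>0$ if $\Psi(v)\ge\min\Psi+\frac\kappa2\operatorname{dist}(v|S)^2$ for all $v$. For proper $h$ and $\epsilon\ge0$, $\partial_\epsilon h(\bar x)=\{w:\langle w,u-\bar x\rangle\le h(u)-h(\bar x)+\epsilon\ \forall u\}$ for $\bar x\in\operatorname{dom}h$, $\emptyset$ otherwise. *)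

theory Defs
  imports "HOL-Analysis.Analysis"
begin

definition fconj :: "('a::real_inner \<Rightarrow> real) \<Rightarrow> 'a \<Rightarrow> ereal" where
  "fconj h v = (SUP u. ereal (inner v u - h u))"

definition edom :: "('a \<Rightarrow> ereal) \<Rightarrow> 'a set" where
  "edom h = {v. h v < \<infinity>}"

definition prox_set :: "('a::real_normed_vector \<Rightarrow> ereal) \<Rightarrow> real \<Rightarrow> 'a \<Rightarrow> 'a set" where
  "prox_set h \<mu> x = {z. \<forall>w. h z + ereal (norm (z - x)^2 / (2*\<mu>)) \<le> h w + ereal (norm (w - x)^2 / (2*\<mu>))}"

definition minimizers :: "('a \<Rightarrow> ereal) \<Rightarrow> 'a set" where
  "minimizers \<Psi> = {v. \<forall>w. \<Psi> v \<le> \<Psi> w}"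

definition quad_growth :: "('a::metric_space \<Rightarrow> ereal) \<Rightarrow> real \<Rightarrow> bool" where
  "quad_growth \<Psi> \<kappa> \<longleftrightarrow> \<kappa> > 0 \<and> minimizers \<Psi> \<noteq> {} \<and>
     (\<forall>v. \<forall>s\<in>minimizers \<Psi>. \<Psi> v \<ge> \<Psi> s + ereal (\<kappa> / 2 * (infdist v (minimizers \<Psi>))^2))"

definition eps_subdiff :: "('a::real_inner \<Rightarrow> real) \<Rightarrow> real \<Rightarrow> 'a \<Rightarrow> 'a set" where
  "eps_subdiff h \<epsilon> x = {w. \<forall>u. inner w (u - x) \<le> h u - h x + \<epsilon>}"

definition Psi_in :: "real^'n^'m \<Rightarrow> (real^'m \<Rightarrow> real) \<Rightarrow> real \<Rightarrow> real^'n \<Rightarrow> real^'m \<Rightarrow> ereal" where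
  "Psi_in A \<omega> lam yt v =
     ereal (norm (lam *\<^sub>R (transpose A *v v) - yt)^2 / (2*lam)) + fconj \<omega> v - ereal (norm yt ^ 2 / (2*lam))"

definition Phi_in :: "real^'n^'m \<Rightarrow> (real^'m \<Rightarrow> real) \<Rightarrow> real \<Rightarrow> real^'n \<Rightarrow> real^'n \<Rightarrow> real" where
  "Phi_in A \<omega> lam yt u = \<omega> (A *v u) + norm (u - yt)^2 / (2*lam)"

definition G_in :: "real^'n^'m \<Rightarrow> (real^'m \<Rightarrow> real) \<Rightarrow> real \<Rightarrow> real^'n \<Rightarrow> real^'n \<Rightarrow> real^'m \<Rightarrow> ereal" where
  "G_in A \<omega> lam yt u v = ereal (Phi_in A \<omega> lam yt u) + Psi_in A \<omega> lam yt v"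

end

theory Submission
  imports Defs
begin

text \<open>Each inner loop is a proximal gradient method on the dual problem \<open>\<Psi>\<^sub>k\<close>. Quadratic
  growth makes the distance of the dual iterates to the solution set contract by the factor
  \<open>\<surd>(\<tau>\<^sub>m\<^sub>a\<^sub>x / (\<tau>\<^sub>m\<^sub>a\<^sub>x + \<kappa>\<^sub>m\<^sub>i\<^sub>n))\<close>, and since \<open>\<omega>\<close> is Lipschitz, \<open>dom \<omega>\<^sup>*\<close> is bounded and the duality gap
  after a step is bounded by the step length. So the gap decays geometrically, uniformly in \<open>k\<close>,
  while the tolerance \<open>\<epsilon>\<^sub>k\<close> decays only polynomially; hence \<open>J\<^sub>k = O(log k)\<close>.

  The outer loop is an accelerated proximal gradient method with errors \<open>\<epsilon>\<^sub>k\<close>; the slack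
  \<open>\<rho>\<^sub>k\<close> absorbs the part of \<open>\<epsilon>\<^sub>k\<close> depending on the inner iterate, and the rest is summable
  after division by \<open>\<alpha>\<^sub>k\<^sup>2 L\<^sub>k \<sim> k\<^sup>-\<^sup>2\<close>. The usual Lyapunov function
  \<open>(F x\<^sub>k - F x\<^sup>*) / (\<alpha>\<^sub>k\<^sup>2 L\<^sub>k) + \<parallel>x\<^sup>* - x\<^sup>\<circ>\<^sub>k\<parallel>\<^sup>2 / 2\<close> therefore stays bounded, which gives
  \<open>F x\<^sub>k - F x\<^sup>* = O(k\<^sup>-\<^sup>2)\<close> and \<open>\<parallel>x\<^sub>k - y\<^sub>k\<parallel> = O(\<alpha>\<^sub>k) = O(1/k)\<close>. The vector
  \<open>\<nabla>f x\<^sub>k + L\<^sub>k (y\<^sub>t\<^sub>k - x\<^sub>k)\<close> is an \<open>\<epsilon>\<^sub>k\<close>-subgradient of \<open>F\<close> at \<open>x\<^sub>k\<close> of norm \<open>O(\<parallel>x\<^sub>k - y\<^sub>k\<parallel>)\<close>.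
  Reaching accuracy \<open>\<epsilon>\<close> thus takes \<open>O(\<epsilon>\<^sup>-\<^sup>1\<^sup>/\<^sup>2)\<close> resp. \<open>O(\<epsilon>\<^sup>-\<^sup>1)\<close> outer iterations of
  \<open>O(log (1/\<epsilon>))\<close> oracle calls each.\<close>

section \<open>Fenchel conjugates and proximal points\<close>

lemma fenchel_young: "ereal (inner v u - h u) \<le> fconj h v"
  unfolding fconj_def by (rule SUP_upper) auto

lemma fconj_neq_minf: "fconj h v \<noteq> -\<infinity>"
  using fenchel_young[of v 0 h] by auto

lemma fconj_le_ereal_iff: "fconj h v \<le> ereal c \<longleftrightarrow> (\<forall>u. inner v u - h u \<le> c)"
  unfolding fconj_def by (auto simp: SUP_le_iff)

lemma fconj_ereal_imp_le: "fconj h v = ereal c \<Longrightarrow> inner v u - h u \<le> c"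
  using fconj_le_ereal_iff[of h v c] by simp

lemma fconj_cases:
  obtains c where "fconj h v = ereal c" | "fconj h v = \<infinity>"
  using fconj_neq_minf[of h v] by (cases "fconj h v") auto

lemma fconj_finite_imp_norm_le:
  fixes \<omega> :: "'a::real_inner \<Rightarrow> real"
  assumes lip: "K-lipschitz_on UNIV \<omega>" and fin: "fconj \<omega> v = ereal c"
  shows "norm v \<le> K"
proof (rule ccontr)
  assume "\<not> norm v \<le> K"
  then have gap: "norm v * (norm v - K) > 0"
    using lipschitz_on_nonneg[OF lip] by (intro mult_pos_pos) auto
  have key: "t * (norm v * (norm v - K)) - \<omega> 0 \<le> c" if t: "t \<ge> 0" for t
  proof -
    have "inner v (t *\<^sub>R v) - \<omega> (t *\<^sub>R v) \<le> c"
      using fin by (rule fconj_ereal_imp_le)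
    moreover have "\<omega> (t *\<^sub>R v) \<le> \<omega> 0 + K * (t * norm v)"
      using lipschitz_onD[OF lip, of "t *\<^sub>R v" 0] t by (simp add: dist_norm abs_le_iff)
    moreover have "inner v (t *\<^sub>R v) = t * (norm v * norm v)"
      by (simp add: dot_square_norm power2_eq_square)
    ultimately have "t * (norm v * norm v) - \<omega> 0 - K * (t * norm v) \<le> c" by linarith
    then show ?thesis by (simp add: algebra_simps)
  qed
  define t where "t = (\<bar>c\<bar> + \<bar>\<omega> 0\<bar> + 1) / (norm v * (norm v - K))"
  have "t * (norm v * (norm v - K)) = \<bar>c\<bar> + \<bar>\<omega> 0\<bar> + 1"
    unfolding t_def using gap by (metis less_irrefl nonzero_eq_divide_eq)
  moreover have "t \<ge> 0" unfolding t_def using gap by simp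
  ultimately show False using key[of t] by linarith
qed

lemma fconj_convex_combination_le:
  assumes "fconj h v = ereal cv" "fconj h w = ereal cw" "0 \<le> s" "s \<le> 1"
  shows "fconj h ((1 - s) *\<^sub>R v + s *\<^sub>R w) \<le> ereal ((1 - s) * cv + s * cw)"
proof -
  have v: "inner v u - h u \<le> cv" and w: "inner w u - h u \<le> cw" for u
    using assms(1,2) by (auto intro: fconj_ereal_imp_le)
  have "inner ((1 - s) *\<^sub>R v + s *\<^sub>R w) u - h u = (1 - s) * (inner v u - h u) + s * (inner w u - h u)" for u
    by (simp add: inner_add_left algebra_simps)
  moreover have "(1 - s) * (inner v u - h u) + s * (inner w u - h u) \<le> (1 - s) * cv + s * cw" for u
    using v[of u] w[of u] assms(3,4) by (intro add_mono mult_left_mono) auto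
  ultimately show ?thesis using fconj_le_ereal_iff by metis
qed

text \<open>The proof separates \<open>(u, \<omega> u - \<delta>)\<close> from the closed convex epigraph of \<open>\<omega>\<close>.\<close>
lemma fconj_subgradient_imp_fenchel_young_eq:
  fixes \<omega> :: "'a::euclidean_space \<Rightarrow> real"
  assumes conv: "convex_on UNIV \<omega>" and cont: "continuous_on UNIV \<omega>"
    and sub: "\<forall>w. fconj \<omega> w \<ge> fconj \<omega> v + ereal (inner u (w - v))"
    and fin: "fconj \<omega> v = ereal c"
  shows "\<omega> u + c \<le> inner u v"
proof (rule field_le_epsilon)
  fix \<delta> :: real assume d: "\<delta> > 0"
  define S where "S = {xy. \<omega> (fst xy) \<le> snd xy}"
  have "convex S"
    using convex_epigraph[of UNIV \<omega>] conv unfolding S_def epigraph_def by simp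
  moreover have "closed S" unfolding S_def
    by (intro closed_Collect_le continuous_on_compose2[OF cont] continuous_intros) auto
  moreover have "(u, \<omega> u - \<delta>) \<notin> S" using d unfolding S_def by auto
  ultimately obtain a b where ab: "a \<bullet> (u, \<omega> u - \<delta>) < b" "\<forall>x\<in>S. b < a \<bullet> x"
    using separating_hyperplane_closed_point by blast
  obtain g cc where a: "a = (g, cc)" by (cases a)
  have h1: "inner g u + cc * (\<omega> u - \<delta>) < b" using ab(1) a by (simp add: inner_Pair)
  have h2: "b < inner g x + cc * \<omega> x" for x
    using ab(2)[rule_format, of "(x, \<omega> x)"] a by (simp add: inner_Pair S_def)
  have "cc * \<delta> > 0" using h1 h2[of u] by (simp add: algebra_simps)
  then have cc: "cc > 0" using d by (simp add: zero_less_mult_iff)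
  define \<gamma> where "\<gamma> = - (1 / cc) *\<^sub>R g"
  have "inner \<gamma> x - \<omega> x \<le> inner \<gamma> u - \<omega> u + \<delta>" for x
  proof -
    have "(inner g u + cc * (\<omega> u - \<delta>)) / cc < (inner g x + cc * \<omega> x) / cc"
      using h1 h2[of x] cc by (simp add: divide_strict_right_mono)
    then show ?thesis
      using cc unfolding \<gamma>_def by (simp add: inner_commute add_divide_distrib)
  qed
  then have "fconj \<omega> \<gamma> \<le> ereal (inner \<gamma> u - \<omega> u + \<delta>)"
    using fconj_le_ereal_iff[of \<omega> \<gamma>] by (simp add: inner_commute)
  moreover have "ereal (c + inner u (\<gamma> - v)) \<le> fconj \<omega> \<gamma>" using sub fin by auto
  ultimately have "c + inner u (\<gamma> - v) \<le> inner \<gamma> u - \<omega> u + \<delta>"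
    using order_trans ereal_less_eq(3) by blast
  then show "\<omega> u + c \<le> inner u v + \<delta>" by (simp add: inner_diff_right inner_commute)
qed

lemma le_of_forall_le_add_scaled:
  fixes a b c :: real
  assumes "\<And>s. 0 < s \<Longrightarrow> s \<le> 1 \<Longrightarrow> a \<le> b + s * c" and "c \<ge> 0"
  shows "a \<le> b"
proof (rule field_le_epsilon)
  fix e :: real assume e: "e > 0"
  define s where "s = min 1 (e / (c + 1))"
  have s: "0 < s" "s \<le> 1" unfolding s_def using e assms(2) by auto
  have "s * c \<le> e / (c + 1) * c" unfolding s_def using assms(2) by (intro mult_right_mono) auto
  also have "\<dots> \<le> e" using e assms(2) by (simp add: field_simps)
  finally show "a \<le> b + e" using assms(1)[OF s] by linarith
qed

lemma prox_set_le:
  assumes "b \<in> prox_set h (1 / t) x" "t > 0"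
  shows "h b + ereal (t / 2 * norm (b - x)^2) \<le> h w + ereal (t / 2 * norm (w - x)^2)"
  using assms unfolding prox_set_def by (auto simp: field_simps)

lemma prox_set_fconj_finite:
  assumes "b \<in> prox_set (fconj h) (1 / t) x" "t > 0" "fconj h a = ereal ca"
  obtains cb where "fconj h b = ereal cb"
proof (cases rule: fconj_cases[of h b])
  case 2
  then show ?thesis using prox_set_le[OF assms(1,2), of a] assms(3) by simp
qed

text \<open>Optimality of the proximal point: \<open>t (x - b)\<close> is a subgradient of \<open>h\<^sup>*\<close> at \<open>b\<close>.
  It is obtained by comparing \<open>b\<close> with the points \<open>b + s (w - b)\<close> and letting \<open>s \<rightarrow> 0\<close>.\<close>
lemma prox_set_fconj_subgradient:
  assumes b: "b \<in> prox_set (fconj h) (1 / t) x" and t: "t > 0"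
    and cb: "fconj h b = ereal cb" and cw: "fconj h w = ereal cw"
  shows "cb + t * inner (x - b) (w - b) \<le> cw"
proof -
  have "cb + t * inner (x - b) (w - b) \<le> cw + s * (t / 2 * norm (w - b)^2)"
    if s: "0 < s" "s \<le> 1" for s
  proof -
    define ws where "ws = (1 - s) *\<^sub>R b + s *\<^sub>R w"
    have "ereal (cb + t / 2 * norm (b - x)^2) \<le> fconj h ws + ereal (t / 2 * norm (ws - x)^2)"
      using prox_set_le[OF b t, of ws] cb by simp
    also have "\<dots> \<le> ereal ((1 - s) * cb + s * cw) + ereal (t / 2 * norm (ws - x)^2)"
      unfolding ws_def using fconj_convex_combination_le[OF cb cw] s by (intro add_mono) auto
    finally have "cb + t / 2 * norm (b - x)^2 \<le> (1 - s) * cb + s * cw + t / 2 * norm (ws - x)^2"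
      by simp
    moreover have "t / 2 * norm (ws - x)^2 = t / 2 * norm (b - x)^2
        - s * (t * inner (x - b) (w - b)) + s * (s * (t / 2 * norm (w - b)^2))"
      unfolding ws_def power2_norm_eq_inner
      by (simp add: inner_diff_left inner_diff_right inner_add_left inner_add_right
          inner_commute algebra_simps)
    ultimately have "s * (cb + t * inner (x - b) (w - b)) \<le> s * (cw + s * (t / 2 * norm (w - b)^2))"
      by (simp add: algebra_simps)
    then show ?thesis using s by (simp add: mult_le_cancel_left_pos)
  qed
  from le_of_forall_le_add_scaled[OF this] show ?thesis using t by simp
qed

section \<open>Proximal gradient on the dual problem\<close>

declare transpose_matrix_vector[simp del]

definition dual_smooth :: "real^'n^'m \<Rightarrow> real \<Rightarrow> real^'n \<Rightarrow> real^'m \<Rightarrow> real" where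
  "dual_smooth A lam yt v = norm (lam *\<^sub>R (transpose A *v v) - yt)^2 / (2 * lam)"

lemma Psi_in_ereal:
  "fconj \<omega> v = ereal c \<Longrightarrow>
    Psi_in A \<omega> lam yt v = ereal (dual_smooth A lam yt v + c - norm yt^2 / (2 * lam))"
  unfolding Psi_in_def dual_smooth_def by simp

lemma Psi_in_infinity: "fconj \<omega> v = \<infinity> \<Longrightarrow> Psi_in A \<omega> lam yt v = \<infinity>"
  unfolding Psi_in_def by simp

lemma inner_transpose_mult:
  fixes A :: "real^'n^'m"
  shows "inner (transpose A *v v) u = inner v (A *v u)"
  by (simp add: dot_lmul_matrix transpose_matrix_vector)

lemma dual_smooth_expansion:
  assumes "lam > 0"
  shows "dual_smooth A lam yt w = dual_smooth A lam yt a
    + inner (A *v (lam *\<^sub>R (transpose A *v a) - yt)) (w - a)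
    + lam / 2 * norm (transpose A *v (w - a))^2"
proof -
  define P Q where "P = transpose A *v a" and "Q = transpose A *v w"
  have TwP: "transpose A *v (w - a) = Q - P"
    unfolding P_def Q_def by (simp add: matrix_vector_mult_diff_distrib)
  have "inner (A *v (lam *\<^sub>R P - yt)) (w - a) = inner (lam *\<^sub>R P - yt) (Q - P)"
    unfolding TwP[symmetric] by (metis inner_commute inner_transpose_mult)
  moreover have "norm (lam *\<^sub>R Q - yt)^2 = norm (lam *\<^sub>R P - yt)^2
      + 2 * lam * inner (lam *\<^sub>R P - yt) (Q - P) + lam^2 * norm (Q - P)^2"
    unfolding power2_norm_eq_inner
    by (simp add: inner_diff_left inner_diff_right inner_commute algebra_simps power2_eq_square)
  ultimately show ?thesis
    unfolding dual_smooth_def TwP P_def[symmetric] Q_def[symmetric] using assms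
    by (simp add: field_simps power2_eq_square)
qed

lemma prox_grad_descent:
  fixes A :: "real^'n^'m"
  assumes lam: "lam > 0" and t: "t > 0"
    and b: "b \<in> prox_set (fconj \<omega>) (1 / t) (a - (1 / t) *\<^sub>R (A *v (lam *\<^sub>R (transpose A *v a) - yt)))"
    and step: "lam / 2 * norm (transpose A *v (b - a))^2 \<le> t / 2 * norm (b - a)^2"
    and cb: "fconj \<omega> b = ereal cb" and cw: "fconj \<omega> w = ereal cw"
  shows "dual_smooth A lam yt b + cb
    \<le> dual_smooth A lam yt w + cw + t / 2 * norm (w - a)^2 - t / 2 * norm (w - b)^2"
proof -
  define g where "g = A *v (lam *\<^sub>R (transpose A *v a) - yt)"
  have "cb + t * inner ((a - (1 / t) *\<^sub>R g) - b) (w - b) \<le> cw"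
    using prox_set_fconj_subgradient[OF b[folded g_def] t cb cw] .
  then have opt: "cb + t * inner (a - b) (w - b) - inner g (w - b) \<le> cw"
    using t by (simp add: inner_diff_left algebra_simps)
  have "dual_smooth A lam yt b \<le> dual_smooth A lam yt a + inner g (b - a) + t / 2 * norm (b - a)^2"
    using dual_smooth_expansion[OF lam, of A yt b a] step unfolding g_def by simp
  moreover have "dual_smooth A lam yt a + inner g (w - a) \<le> dual_smooth A lam yt w"
    using dual_smooth_expansion[OF lam, of A yt w a] lam unfolding g_def by simp
  moreover have "t / 2 * norm (w - a)^2
      = t / 2 * norm (w - b)^2 + t * inner (b - a) (w - b) + t / 2 * norm (b - a)^2"
    unfolding power2_norm_eq_inner
    by (simp add: inner_diff_left inner_diff_right inner_commute algebra_simps)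
  moreover have "inner g (w - a) - inner g (b - a) = inner g (w - b)"
    by (simp add: inner_diff_right)
  moreover have "inner (a - b) (w - b) = - inner (b - a) (w - b)"
    by (simp add: inner_diff_left)
  ultimately show ?thesis using opt by (simp add: algebra_simps)
qed

lemma G_in_eq_fenchel_gap:
  fixes A :: "real^'n^'m"
  assumes lam: "lam > 0" and cb: "fconj \<omega> b = ereal cb"
    and z: "z = yt - lam *\<^sub>R (transpose A *v b)"
  shows "G_in A \<omega> lam yt z b = ereal (\<omega> (A *v z) + cb - inner b (A *v z))"
proof -
  define Q where "Q = transpose A *v b"
  have "inner b (A *v z) = inner Q z"
    unfolding Q_def by (simp add: inner_transpose_mult)
  moreover have "norm (z - yt)^2 + norm (lam *\<^sub>R Q - yt)^2 - norm yt^2 = - 2 * lam * inner Q z"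
    unfolding z Q_def[symmetric] power2_norm_eq_inner
    by (simp add: inner_diff_left inner_diff_right inner_commute algebra_simps power2_eq_square)
  then have "(norm (z - yt)^2 + norm (lam *\<^sub>R Q - yt)^2 - norm yt^2) / (2 * lam) = - inner Q z"
    using lam by simp
  then have "norm (z - yt)^2 / (2 * lam) + norm (lam *\<^sub>R Q - yt)^2 / (2 * lam)
      - norm yt^2 / (2 * lam) = - inner Q z"
    by (simp add: diff_divide_distrib add_divide_distrib)
  ultimately show ?thesis
    unfolding G_in_def Phi_in_def Psi_in_ereal[OF cb] dual_smooth_def Q_def by simp
qed

text \<open>\<open>u = t (x - b)\<close> is a subgradient of \<open>\<omega>\<^sup>*\<close> at \<open>b\<close>, so Fenchel--Young is tight at \<open>(u, b)\<close>;
  moving from \<open>u\<close> to \<open>A z\<close> costs at most \<open>2 K \<parallel>u - A z\<parallel>\<close> because \<open>\<omega>\<close> is \<open>K\<close>-Lipschitz and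
  \<open>\<parallel>b\<parallel> \<le> K\<close>.\<close>
lemma G_in_le_step_length:
  fixes A :: "real^'n^'m" and \<omega> :: "real^'m \<Rightarrow> real"
  assumes conv: "convex_on UNIV \<omega>" and lip: "K-lipschitz_on UNIV \<omega>"
    and lam: "lam > 0" and t: "t > 0" and cb: "fconj \<omega> b = ereal cb"
    and b: "b \<in> prox_set (fconj \<omega>) (1 / t) (a - (1 / t) *\<^sub>R (A *v (lam *\<^sub>R (transpose A *v a) - yt)))"
    and N: "\<forall>d. norm (A *v (transpose A *v d)) \<le> N * norm d"
  shows "G_in A \<omega> lam yt (yt - lam *\<^sub>R (transpose A *v b)) b
    \<le> ereal (2 * K * (t + lam * N) * norm (b - a))"
proof -
  define g where "g = A *v (lam *\<^sub>R (transpose A *v a) - yt)"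
  define u where "u = t *\<^sub>R ((a - (1 / t) *\<^sub>R g) - b)"
  define z where "z = yt - lam *\<^sub>R (transpose A *v b)"
  have sub: "\<forall>w. fconj \<omega> w \<ge> fconj \<omega> b + ereal (inner u (w - b))"
  proof
    fix w
    show "fconj \<omega> w \<ge> fconj \<omega> b + ereal (inner u (w - b))"
    proof (cases rule: fconj_cases[of \<omega> w])
      case (1 cw)
      then show ?thesis
        using prox_set_fconj_subgradient[OF b[folded g_def] t cb 1] cb unfolding u_def by simp
    qed simp
  qed
  have fy: "\<omega> u + cb \<le> inner u b"
    using fconj_subgradient_imp_fenchel_young_eq[OF conv lipschitz_on_continuous_on[OF lip] sub cb] .
  have "norm b \<le> K" using fconj_finite_imp_norm_le[OF lip cb] .
  then have "inner b (u - A *v z) \<le> K * norm (u - A *v z)"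
    using norm_cauchy_schwarz[of b "u - A *v z"] by (meson mult_right_mono norm_ge_zero order_trans)
  moreover have "\<omega> (A *v z) - \<omega> u \<le> K * norm (u - A *v z)"
    using lipschitz_onD[OF lip, of "A *v z" u] by (simp add: dist_norm norm_minus_commute)
  moreover have "norm (u - A *v z) \<le> (t + lam * N) * norm (b - a)"
  proof -
    have "u - A *v z = t *\<^sub>R (a - b) - lam *\<^sub>R (A *v (transpose A *v (a - b)))"
      unfolding u_def z_def g_def using t
      by (simp add: algebra_simps matrix_vector_mult_diff_distrib matrix_vector_mult_scaleR)
    then have "norm (u - A *v z)
        \<le> norm (t *\<^sub>R (a - b)) + norm (lam *\<^sub>R (A *v (transpose A *v (a - b))))"
      by (simp only: norm_triangle_ineq4)
    also have "\<dots> \<le> t * norm (b - a) + lam * (N * norm (b - a))"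
      using mult_left_mono[OF N[rule_format, of "a - b"], of lam] t lam
      by (simp add: norm_minus_commute)
    finally show ?thesis by (simp add: algebra_simps)
  qed
  then have "K * norm (u - A *v z) \<le> K * ((t + lam * N) * norm (b - a))"
    using lipschitz_on_nonneg[OF lip] by (rule mult_left_mono)
  ultimately have "\<omega> (A *v z) + cb - inner b (A *v z) \<le> 2 * K * ((t + lam * N) * norm (b - a))"
    using fy by (simp add: inner_diff_right inner_commute)
  then show ?thesis
    using G_in_eq_fenchel_gap[OF lam cb z_def] unfolding z_def by (simp add: mult.assoc)
qed

lemma le_infdistI: "S \<noteq> {} \<Longrightarrow> (\<And>s. s \<in> S \<Longrightarrow> c \<le> dist a s) \<Longrightarrow> c \<le> infdist a S"
  unfolding infdist_notempty by (rule cINF_greatest) auto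

lemma le_sqrt_ratio_mult_of_sq_le:
  fixes D E t \<kappa> T \<kappa>0 :: real
  assumes "D^2 * (t + \<kappa>) \<le> t * E^2" "0 < t" "t \<le> T" "0 < \<kappa>0" "\<kappa>0 \<le> \<kappa>" "D \<ge> 0" "E \<ge> 0"
  shows "D \<le> sqrt (T / (T + \<kappa>0)) * E"
proof -
  have "\<kappa>0 * t \<le> \<kappa> * T" using assms by (intro mult_mono) auto
  then have tk: "t * (T + \<kappa>0) \<le> T * (t + \<kappa>)" by (simp add: algebra_simps)
  have "D^2 * (T + \<kappa>0) * (t + \<kappa>) = (D^2 * (t + \<kappa>)) * (T + \<kappa>0)" by (simp add: algebra_simps)
  also have "\<dots> \<le> (t * E^2) * (T + \<kappa>0)" using assms by (intro mult_right_mono) auto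
  also have "\<dots> = (t * (T + \<kappa>0)) * E^2" by (simp add: algebra_simps)
  also have "\<dots> \<le> (T * (t + \<kappa>)) * E^2" using tk by (intro mult_right_mono) auto
  finally have "D^2 * (T + \<kappa>0) * (t + \<kappa>) \<le> (T * E^2) * (t + \<kappa>)" by (simp add: algebra_simps)
  then have "D^2 * (T + \<kappa>0) \<le> T * E^2" using assms by (simp add: mult_le_cancel_right_pos)
  then have "D^2 \<le> (T / (T + \<kappa>0)) * E^2" using assms by (simp add: field_simps)
  then have "sqrt (D^2) \<le> sqrt (T / (T + \<kappa>0)) * sqrt (E^2)"
    by (metis real_sqrt_le_mono real_sqrt_mult)
  then show ?thesis using assms by simp
qed

locale dual_prox_gradient =
  fixes A :: "real^'n^'m" and \<omega> :: "real^'m \<Rightarrow> real" and K lam \<kappa> :: real and yt :: "real^'n"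
    and v :: "nat \<Rightarrow> real^'m" and \<tau> :: "nat \<Rightarrow> real"
  assumes \<omega>_convex: "convex_on UNIV \<omega>" and \<omega>_lip: "K-lipschitz_on UNIV \<omega>"
    and lam_pos: "lam > 0"
    and growth: "quad_growth (Psi_in A \<omega> lam yt) \<kappa>"
    and \<tau>_pos: "\<And>j. \<tau> j > 0"
    and v0_dom: "v 0 \<in> edom (fconj \<omega>)"
    and v_step: "\<And>j. v (Suc j) \<in> prox_set (fconj \<omega>) (1 / \<tau> j)
                   (v j - (1 / \<tau> j) *\<^sub>R (A *v (lam *\<^sub>R (transpose A *v v j) - yt)))"
    and \<tau>_step: "\<And>j. lam / 2 * norm (transpose A *v (v (Suc j) - v j))^2
                    \<le> \<tau> j / 2 * norm (v (Suc j) - v j)^2"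
begin

abbreviation "S \<equiv> minimizers (Psi_in A \<omega> lam yt)"

lemma S_nonempty: "S \<noteq> {}" and \<kappa>_pos: "\<kappa> > 0"
  and S_growth: "s \<in> S \<Longrightarrow> Psi_in A \<omega> lam yt w \<ge> Psi_in A \<omega> lam yt s + ereal (\<kappa> / 2 * (infdist w S)^2)"
  using growth unfolding quad_growth_def by auto

lemma fconj_iterate_finite:
  obtains c where "fconj \<omega> (v j) = ereal c"
proof (induction j arbitrary: thesis)
  case 0
  then show ?case using v0_dom unfolding edom_def by (cases rule: fconj_cases[of \<omega> "v 0"]) auto
next
  case (Suc j)
  then show ?case using prox_set_fconj_finite[OF v_step \<tau>_pos] by (metis Suc.IH)
qed

lemma fconj_S_finite:
  assumes "s \<in> S"
  obtains c where "fconj \<omega> s = ereal c"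
proof (cases rule: fconj_cases[of \<omega> s])
  case 2
  obtain c where "fconj \<omega> (v 0) = ereal c" by (rule fconj_iterate_finite)
  moreover have "Psi_in A \<omega> lam yt s \<le> Psi_in A \<omega> lam yt (v 0)"
    using assms unfolding minimizers_def by auto
  ultimately show ?thesis using Psi_in_infinity[OF 2, of A lam yt] Psi_in_ereal[of \<omega> "v 0" c A lam yt]
    by simp
qed

lemma norm_iterate_le: "norm (v j) \<le> K"
  by (metis fconj_iterate_finite fconj_finite_imp_norm_le[OF \<omega>_lip])

lemma norm_S_le: "s \<in> S \<Longrightarrow> norm s \<le> K"
  by (metis fconj_S_finite fconj_finite_imp_norm_le[OF \<omega>_lip])

lemma dist_S_descent:
  assumes s: "s \<in> S"
  shows "\<tau> j / 2 * norm (s - v (Suc j))^2 + \<kappa> / 2 * (infdist (v (Suc j)) S)^2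
    \<le> \<tau> j / 2 * norm (s - v j)^2"
proof -
  obtain cs where cs: "fconj \<omega> s = ereal cs" using fconj_S_finite[OF s] .
  obtain c where c: "fconj \<omega> (v (Suc j)) = ereal c" by (rule fconj_iterate_finite)
  have "dual_smooth A lam yt (v (Suc j)) + c \<le> dual_smooth A lam yt s + cs
      + \<tau> j / 2 * norm (s - v j)^2 - \<tau> j / 2 * norm (s - v (Suc j))^2"
    using prox_grad_descent[OF lam_pos \<tau>_pos v_step \<tau>_step c cs] .
  moreover have "dual_smooth A lam yt s + cs + \<kappa> / 2 * (infdist (v (Suc j)) S)^2
      \<le> dual_smooth A lam yt (v (Suc j)) + c"
    using S_growth[OF s, of "v (Suc j)"] unfolding Psi_in_ereal[OF c] Psi_in_ereal[OF cs] by simp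
  ultimately show ?thesis by linarith
qed

lemma infdist_S_Suc_le:
  assumes T: "\<tau> j \<le> T" and \<kappa>0: "0 < \<kappa>0" "\<kappa>0 \<le> \<kappa>"
  shows "infdist (v (Suc j)) S \<le> sqrt (T / (T + \<kappa>0)) * infdist (v j) S"
proof -
  define r where "r = sqrt (T / (T + \<kappa>0))"
  have r: "r > 0" unfolding r_def using \<tau>_pos[of j] T \<kappa>0 by simp
  have "infdist (v (Suc j)) S / r \<le> dist (v j) s" if s: "s \<in> S" for s
  proof -
    let ?D = "infdist (v (Suc j)) S"
    have "?D \<le> norm (s - v (Suc j))"
      using infdist_le[OF s, of "v (Suc j)"] by (simp add: dist_norm norm_minus_commute)
    then have "?D^2 \<le> norm (s - v (Suc j))^2" by (simp add: infdist_nonneg power_mono)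
    then have "\<tau> j * ?D^2 \<le> \<tau> j * norm (s - v (Suc j))^2"
      using \<tau>_pos[of j] by (simp add: mult_left_mono)
    then have "?D^2 * (\<tau> j + \<kappa>) \<le> \<tau> j * norm (s - v j)^2"
      using dist_S_descent[OF s, of j] by (simp add: algebra_simps)
    then have "?D \<le> r * norm (s - v j)"
      unfolding r_def
      by (rule le_sqrt_ratio_mult_of_sq_le[OF _ \<tau>_pos T \<kappa>0 infdist_nonneg norm_ge_zero])
    then show ?thesis using r by (simp add: dist_norm norm_minus_commute field_simps)
  qed
  then have "infdist (v (Suc j)) S / r \<le> infdist (v j) S" by (rule le_infdistI[OF S_nonempty])
  then show ?thesis using r unfolding r_def[symmetric] by (simp add: field_simps)
qed

lemma step_le_infdist_S: "norm (v (Suc j) - v j) \<le> 2 * infdist (v j) S"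
proof -
  have "norm (v (Suc j) - v j) / 2 \<le> dist (v j) s" if s: "s \<in> S" for s
  proof -
    have "0 \<le> \<kappa> / 2 * (infdist (v (Suc j)) S)^2" using \<kappa>_pos by simp
    then have "\<tau> j / 2 * norm (s - v (Suc j))^2 \<le> \<tau> j / 2 * norm (s - v j)^2"
      using dist_S_descent[OF s, of j] by linarith
    then have "norm (s - v (Suc j))^2 \<le> norm (s - v j)^2" using \<tau>_pos[of j] by simp
    then have "norm (s - v (Suc j)) \<le> norm (s - v j)" by (rule power2_le_imp_le) simp
    moreover have "norm (v (Suc j) - v j) \<le> norm (s - v (Suc j)) + norm (s - v j)"
      using norm_triangle_ineq4[of "s - v j" "s - v (Suc j)"] by simp
    ultimately show ?thesis by (simp add: dist_norm norm_minus_commute)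
  qed
  then have "norm (v (Suc j) - v j) / 2 \<le> infdist (v j) S" by (rule le_infdistI[OF S_nonempty])
  then show ?thesis by simp
qed

lemma infdist_S_le:
  assumes T: "\<And>j. \<tau> j \<le> T" and \<kappa>0: "0 < \<kappa>0" "\<kappa>0 \<le> \<kappa>"
  shows "infdist (v j) S \<le> 2 * K * sqrt (T / (T + \<kappa>0)) ^ j"
proof (induction j)
  case 0
  obtain s where s: "s \<in> S" using S_nonempty by blast
  have "infdist (v 0) S \<le> norm (v 0) + norm s"
    using infdist_le[OF s, of "v 0"] by (simp add: dist_norm norm_triangle_ineq4 order_trans)
  then show ?case using norm_iterate_le[of 0] norm_S_le[OF s] by simp
next
  case (Suc j)
  have "sqrt (T / (T + \<kappa>0)) \<ge> 0" using T[of 0] \<tau>_pos[of 0] \<kappa>0 by simp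
  then have "sqrt (T / (T + \<kappa>0)) * infdist (v j) S
      \<le> sqrt (T / (T + \<kappa>0)) * (2 * K * sqrt (T / (T + \<kappa>0)) ^ j)"
    by (rule mult_left_mono[OF Suc.IH])
  then show ?case using infdist_S_Suc_le[OF T \<kappa>0, of j] by (simp add: algebra_simps)
qed

text \<open>The constant depends only on bounds for \<open>\<tau>\<close>, \<open>\<lambda>\<close>, \<open>\<parallel>A A\<^sup>T\<parallel>\<close> and \<open>\<kappa>\<close>, which makes it
  uniform over the outer iterations.\<close>
lemma G_in_iterate_le:
  assumes T: "\<And>j. \<tau> j \<le> T" and \<kappa>0: "0 < \<kappa>0" "\<kappa>0 \<le> \<kappa>" and \<Lambda>: "lam \<le> \<Lambda>"
    and N: "\<forall>d. norm (A *v (transpose A *v d)) \<le> N * norm d" "N \<ge> 0"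
  shows "G_in A \<omega> lam yt (yt - lam *\<^sub>R (transpose A *v v (Suc j))) (v (Suc j))
    \<le> ereal (8 * K^2 * (T + \<Lambda> * N) * sqrt (T / (T + \<kappa>0)) ^ j)"
proof -
  obtain c where c: "fconj \<omega> (v (Suc j)) = ereal c" by (rule fconj_iterate_finite)
  have K: "K \<ge> 0" using lipschitz_on_nonneg[OF \<omega>_lip] .
  have "norm (v (Suc j) - v j) \<le> 4 * K * sqrt (T / (T + \<kappa>0)) ^ j"
    using step_le_infdist_S[of j] infdist_S_le[OF T \<kappa>0, of j] by simp
  moreover have "\<tau> j + lam * N \<le> T + \<Lambda> * N"
    using T[of j] \<Lambda> N(2) by (simp add: add_mono mult_right_mono)
  moreover have "0 \<le> \<tau> j + lam * N" using \<tau>_pos[of j] lam_pos N(2) by simp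
  ultimately have "2 * K * (\<tau> j + lam * N) * norm (v (Suc j) - v j)
      \<le> 2 * K * (T + \<Lambda> * N) * (4 * K * sqrt (T / (T + \<kappa>0)) ^ j)"
    using K by (intro mult_mono) auto
  also have "\<dots> = 8 * K^2 * (T + \<Lambda> * N) * sqrt (T / (T + \<kappa>0)) ^ j"
    by (simp add: power2_eq_square)
  finally have "ereal (2 * K * (\<tau> j + lam * N) * norm (v (Suc j) - v j))
      \<le> ereal (8 * K^2 * (T + \<Lambda> * N) * sqrt (T / (T + \<kappa>0)) ^ j)"
    by simp
  with G_in_le_step_length[OF \<omega>_convex \<omega>_lip lam_pos \<tau>_pos c v_step N(1)] show ?thesis
    by (rule order_trans)
qed

end

section \<open>Smooth convex functions and inexact proximal gradient steps\<close>

lemma convex_on_compose_affine: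
  assumes conv: "convex_on UNIV f" and lin: "linear h"
  shows "convex_on UNIV (\<lambda>x. f (c + h x))"
proof (rule convex_onI)
  fix t :: real and x y assume t: "0 < t" "t < 1"
  have "h ((1 - t) *\<^sub>R x + t *\<^sub>R y) = (1 - t) *\<^sub>R h x + t *\<^sub>R h y"
    by (simp only: linear_add[OF lin] linear_cmul[OF lin])
  then have "c + h ((1 - t) *\<^sub>R x + t *\<^sub>R y) = (1 - t) *\<^sub>R (c + h x) + t *\<^sub>R (c + h y)"
    by (simp add: algebra_simps)
  then show "f (c + h ((1 - t) *\<^sub>R x + t *\<^sub>R y)) \<le> (1 - t) * f (c + h x) + t * f (c + h y)"
    using convex_onD[OF conv, of t] t by simp
qed simp

lemma convex_gradient_inequality:
  fixes f :: "'a::real_inner \<Rightarrow> real"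
  assumes conv: "convex_on UNIV f" and der: "\<forall>u. (f has_derivative (\<lambda>h. inner (gf u) h)) (at u)"
  shows "f w + inner (gf w) (u - w) \<le> f u"
proof -
  define g where "g t = f (w + t *\<^sub>R (u - w))" for t :: real
  have g_conv: "convex_on UNIV g"
    unfolding g_def by (rule convex_on_compose_affine[OF conv linear_scaleR_left])
  have "((\<lambda>t. w + t *\<^sub>R (u - w)) has_derivative (\<lambda>t. t *\<^sub>R (u - w))) (at 0)"
    by (auto intro!: derivative_eq_intros)
  moreover have "(f has_derivative (\<lambda>h. inner (gf w) h)) (at (w + 0 *\<^sub>R (u - w)))"
    using der by simp
  ultimately have "(g has_derivative (\<lambda>t. inner (gf w) (t *\<^sub>R (u - w)))) (at 0)"
    unfolding g_def by (rule has_derivative_compose)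
  then have "(g has_field_derivative inner (gf w) (u - w)) (at 0)"
    by (simp add: has_field_derivative_def mult_commute_abs)
  then have "inner (gf w) (u - w) * (1 - 0) \<le> g 1 - g 0"
    by (intro convex_on_imp_above_tangent[OF g_conv]) auto
  then show ?thesis unfolding g_def by simp
qed

text \<open>Compare \<open>f\<close> at \<open>y - (gf y - gf x) / L\<close> with its lower tangent at \<open>x\<close> and its upper
  quadratic model at \<open>y\<close>.\<close>
lemma smooth_convex_gradient_diff_sq_le:
  fixes f :: "'a::real_inner \<Rightarrow> real"
  assumes conv: "convex_on UNIV f" and der: "\<forall>u. (f has_derivative (\<lambda>h. inner (gf u) h)) (at u)"
    and smooth: "\<forall>u w. f u - f w - inner (gf w) (u - w) \<le> L / 2 * norm (u - w)^2" and L: "L > 0"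
  shows "norm (gf y - gf x)^2 / (2 * L) \<le> f y - f x - inner (gf x) (y - x)"
proof -
  define d where "d = gf y - gf x"
  define u where "u = y - (1 / L) *\<^sub>R d"
  have "f x + inner (gf x) (u - x) \<le> f u" by (rule convex_gradient_inequality[OF conv der])
  moreover have "f u - f y - inner (gf y) (u - y) \<le> L / 2 * norm (u - y)^2" using smooth by blast
  moreover have "L / 2 * norm (u - y)^2 = norm d^2 / (2 * L)"
    unfolding u_def using L by (simp add: power2_eq_square field_simps)
  moreover have "inner (gf x) (u - x) - inner (gf y) (u - y) = inner (gf x) (y - x) + norm d^2 / L"
    unfolding u_def d_def
    by (simp add: inner_diff_left inner_diff_right power2_norm_eq_inner diff_divide_distrib)
  ultimately show ?thesis unfolding d_def by (simp add: field_simps)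
qed

lemma smooth_convex_gradient_lipschitz:
  fixes f :: "'a::real_inner \<Rightarrow> real"
  assumes conv: "convex_on UNIV f" and der: "\<forall>u. (f has_derivative (\<lambda>h. inner (gf u) h)) (at u)"
    and smooth: "\<forall>u w. f u - f w - inner (gf w) (u - w) \<le> L / 2 * norm (u - w)^2" and L: "L > 0"
  shows "norm (gf y - gf x) \<le> L * norm (y - x)"
proof -
  note cocoercive = smooth_convex_gradient_diff_sq_le[OF conv der smooth L]
  have "inner (gf y - gf x) (y - x) = - inner (gf x) (y - x) - inner (gf y) (x - y)"
    by (simp add: inner_diff_left inner_diff_right algebra_simps)
  then have "norm (gf y - gf x)^2 / L \<le> inner (gf y - gf x) (y - x)"
    using cocoercive[of y x] cocoercive[of x y] by (simp add: norm_minus_commute field_simps)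
  also have "\<dots> \<le> norm (gf y - gf x) * norm (y - x)" by (rule norm_cauchy_schwarz)
  finally have "norm (gf y - gf x) * norm (gf y - gf x) \<le> norm (gf y - gf x) * (L * norm (y - x))"
    using L by (simp add: field_simps power2_eq_square)
  moreover have "0 \<le> L * norm (y - x)" using L by simp
  ultimately show ?thesis
    by (cases "norm (gf y - gf x) = 0") (simp_all add: less_le mult_le_cancel_left_pos)
qed

lemma G_in_le_imp_inexact_prox:
  fixes A :: "real^'n^'m" and \<omega> :: "real^'m \<Rightarrow> real"
  assumes lam: "lam > 0" and x: "x = yt - lam *\<^sub>R (transpose A *v v)"
    and G: "G_in A \<omega> lam yt x v \<le> ereal \<epsilon>"
  shows "Phi_in A \<omega> lam yt x + norm (w - x)^2 / (2 * lam) \<le> Phi_in A \<omega> lam yt w + \<epsilon>"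
proof -
  obtain c where c: "fconj \<omega> v = ereal c"
    using G Psi_in_infinity[of \<omega> v A lam yt] unfolding G_in_def
    by (cases rule: fconj_cases[of \<omega> v]) auto
  have "Phi_in A \<omega> lam yt x + (dual_smooth A lam yt v + c - norm yt^2 / (2 * lam)) \<le> \<epsilon>"
    using G unfolding G_in_def Psi_in_ereal[OF c] by simp
  moreover have "inner (transpose A *v v) w - \<omega> (A *v w) \<le> c"
    using fconj_ereal_imp_le[OF c, of "A *v w"] by (simp add: inner_transpose_mult)
  moreover have "norm (w - yt)^2 + norm (lam *\<^sub>R (transpose A *v v) - yt)^2
      + 2 * lam * inner (transpose A *v v) w - norm yt^2 = norm (w - x)^2"
    unfolding x power2_norm_eq_inner
    by (simp add: inner_diff_left inner_diff_right inner_commute algebra_simps power2_eq_square)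
  then have "norm (w - yt)^2 / (2 * lam) + dual_smooth A lam yt v + inner (transpose A *v v) w
      - norm yt^2 / (2 * lam) = norm (w - x)^2 / (2 * lam)"
    unfolding dual_smooth_def using lam by (simp add: field_simps)
  ultimately show ?thesis unfolding Phi_in_def by linarith
qed

lemma inexact_prox_subgradient:
  fixes A :: "real^'n^'m" and \<omega> :: "real^'m \<Rightarrow> real"
  assumes L: "Lk > 0"
    and prox: "Phi_in A \<omega> (1 / Lk) yt x + norm (w - x)^2 / (2 * (1 / Lk))
      \<le> Phi_in A \<omega> (1 / Lk) yt w + \<epsilon>"
  shows "\<omega> (A *v x) + Lk * inner (yt - x) (w - x) - \<epsilon> \<le> \<omega> (A *v w)"
proof -
  have sq: "norm (w - yt)^2 = norm (w - x)^2 + 2 * inner (w - x) (x - yt) + norm (x - yt)^2"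
    unfolding power2_norm_eq_inner
    by (simp add: inner_diff_left inner_diff_right inner_commute algebra_simps)
  have "Lk / 2 * norm (w - yt)^2
      = Lk / 2 * norm (w - x)^2 - Lk * inner (yt - x) (w - x) + Lk / 2 * norm (x - yt)^2"
    unfolding sq by (simp add: inner_diff_left inner_diff_right inner_commute algebra_simps)
  then show ?thesis using prox L unfolding Phi_in_def by (simp add: field_simps)
qed

text \<open>The error \<open>\<epsilon>\<close> may be paid for by the slack \<open>\<rho>\<close> of the local smoothness estimate.\<close>
lemma inexact_prox_grad_step:
  fixes f :: "real^'n \<Rightarrow> real" and A :: "real^'n^'m" and \<omega> :: "real^'m \<Rightarrow> real"
  assumes conv: "convex_on UNIV f" and der: "\<forall>u. (f has_derivative (\<lambda>h. inner (gf u) h)) (at u)"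
    and L: "Lk > 0" and yt: "yt = y - (1 / Lk) *\<^sub>R gf y"
    and prox: "Phi_in A \<omega> (1 / Lk) yt x + norm (w - x)^2 / (2 * (1 / Lk))
      \<le> Phi_in A \<omega> (1 / Lk) yt w + \<epsilon>"
    and B: "f x - f y - inner (gf y) (x - y) \<le> B / 2 * norm (x - y)^2" and LB: "Lk = B + \<rho>"
  shows "f x + \<omega> (A *v x) \<le> f w + \<omega> (A *v w) + Lk / 2 * norm (w - y)^2 - Lk / 2 * norm (w - x)^2
    - \<rho> / 2 * norm (x - y)^2 + \<epsilon>"
proof -
  have sq: "norm (a - yt)^2 = norm (a - y)^2 + 2 / Lk * inner (a - y) (gf y) + norm (gf y)^2 / Lk^2"
    for a
    unfolding yt power2_norm_eq_inner using L
    by (simp add: inner_diff_left inner_diff_right inner_commute algebra_simps power2_eq_square)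
  have "Lk / 2 * norm (w - yt)^2 - Lk / 2 * norm (x - yt)^2
      = Lk / 2 * norm (w - y)^2 - Lk / 2 * norm (x - y)^2 + inner (gf y) (w - x)"
    unfolding sq[of w] sq[of x] using L
    by (simp add: inner_diff_left inner_diff_right inner_commute field_simps)
  moreover have "f y + inner (gf y) (w - y) \<le> f w" by (rule convex_gradient_inequality[OF conv der])
  moreover have "inner (gf y) (w - x) = inner (gf y) (w - y) - inner (gf y) (x - y)"
    by (simp add: inner_diff_right)
  ultimately show ?thesis using prox B L unfolding Phi_in_def LB by (simp add: field_simps)
qed

section \<open>The momentum sequence\<close>

lemma recip_increment_bounds:
  fixes a b l :: real
  assumes a: "a > 0" and b: "b > 0" and l: "l > 0" and ba: "b \<le> a"
    and h: "(a - b) * (a + b) * l = a^2 * b"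
  shows "1 / (2 * l) \<le> 1 / b - 1 / a" and "1 / b - 1 / a \<le> 1 / l"
proof -
  have ab: "a + b > 0" using a b by simp
  have "l * (a - b) * (a + b) \<le> (a * b) * (a + b)"
    using h a b by (simp add: power2_eq_square algebra_simps mult_right_mono)
  then have up: "l * (a - b) \<le> a * b" using ab by (simp add: mult_le_cancel_right_pos)
  have "(a * b) * (a + b) \<le> (a * b) * (2 * a)" using ba a b by (intro mult_left_mono) auto
  also have "\<dots> = (2 * l * (a - b)) * (a + b)" using h by (simp add: power2_eq_square algebra_simps)
  finally have lo: "a * b \<le> 2 * l * (a - b)" using ab by (simp add: mult_le_cancel_right_pos)
  have eq: "1 / b - 1 / a = (a - b) / (a * b)" using a b by (simp add: field_simps)
  show "1 / (2 * l) \<le> 1 / b - 1 / a" unfolding eq using lo a b l by (simp add: field_simps)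
  show "1 / b - 1 / a \<le> 1 / l" unfolding eq using up a b l by (simp add: field_simps)
qed

locale momentum =
  fixes Lk \<alpha> :: "nat \<Rightarrow> real" and Lmin Lmax :: real
  assumes Lmin_pos: "0 < Lmin"
    and Lk_bnd: "\<forall>k. Lmin \<le> Lk k \<and> Lk k \<le> Lmax"
    and \<alpha>0: "\<alpha> 0 = 1"
    and \<alpha>_rng: "\<forall>k\<ge>1. 0 < \<alpha> k \<and> \<alpha> k \<le> 1"
    and \<alpha>_rec: "\<forall>k\<ge>1. 1 - \<alpha> k = \<alpha> k ^ 2 * Lk k / (\<alpha> (k - 1) ^ 2 * Lk (k - 1))"
begin

definition weight :: "nat \<Rightarrow> real" where
  "weight k = Lk k * \<alpha> k ^ 2"

lemma Lk_pos: "Lk k > 0"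
  using Lk_bnd Lmin_pos by (meson less_le_trans)

lemma Lmax_pos: "Lmax > 0"
  using Lk_bnd Lk_pos by (meson less_le_trans)

lemma \<alpha>_pos: "\<alpha> k > 0" and \<alpha>_le_1: "\<alpha> k \<le> 1"
  using \<alpha>0 \<alpha>_rng by (cases "k = 0"; simp)+

lemma weight_pos: "weight k > 0"
  unfolding weight_def using Lk_pos[of k] \<alpha>_pos[of k] by simp

lemma weight_0: "weight 0 = Lk 0"
  unfolding weight_def using \<alpha>0 by simp

lemma weight_Suc: "weight (Suc k) = weight k * (1 - \<alpha> (Suc k))"
proof -
  have "1 - \<alpha> (Suc k) = \<alpha> (Suc k) ^ 2 * Lk (Suc k) / (\<alpha> k ^ 2 * Lk k)"
    using \<alpha>_rec[rule_format, of "Suc k"] by simp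
  then have "(1 - \<alpha> (Suc k)) * (\<alpha> k ^ 2 * Lk k) = \<alpha> (Suc k) ^ 2 * Lk (Suc k)"
    using \<alpha>_pos[of k] Lk_pos[of k] by (simp add: eq_divide_eq)
  then show ?thesis unfolding weight_def by (simp add: ac_simps)
qed

lemma recip_sigma_increment:
  defines "\<sigma> \<equiv> \<lambda>k. \<alpha> k * sqrt (Lk k)"
  shows "1 / (2 * sqrt Lmax) \<le> 1 / \<sigma> (Suc k) - 1 / \<sigma> k"
    and "1 / \<sigma> (Suc k) - 1 / \<sigma> k \<le> 1 / sqrt Lmin"
proof -
  have \<sigma>_pos: "\<sigma> i > 0" for i unfolding \<sigma>_def using \<alpha>_pos Lk_pos by simp
  have sq: "\<sigma> i ^ 2 = weight i" for i
    unfolding \<sigma>_def weight_def using Lk_pos[of i] by (simp add: power_mult_distrib)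
  let ?a = "\<sigma> k" and ?b = "\<sigma> (Suc k)" and ?l = "sqrt (Lk (Suc k))"
  have l: "?l > 0" using Lk_pos by simp
  have b2: "?b^2 = ?a^2 * (1 - \<alpha> (Suc k))" unfolding sq using weight_Suc by simp
  have "?b^2 \<le> ?a^2" unfolding b2 using \<alpha>_pos[of "Suc k"] \<sigma>_pos[of k] by (simp add: mult_left_le)
  then have ba: "?b \<le> ?a" using \<sigma>_pos[of k] \<sigma>_pos[of "Suc k"] by (simp add: power_mono_iff)
  have "(?a - ?b) * (?a + ?b) = ?a^2 - ?b^2" by (simp add: power2_eq_square algebra_simps)
  also have "\<dots> = ?a^2 * \<alpha> (Suc k)" unfolding b2 by (simp add: algebra_simps)
  finally have "(?a - ?b) * (?a + ?b) = ?a^2 * \<alpha> (Suc k)" .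
  moreover have "\<alpha> (Suc k) = ?b / ?l" unfolding \<sigma>_def using l by simp
  ultimately have h: "(?a - ?b) * (?a + ?b) * ?l = ?a^2 * ?b" using l by simp
  note bounds = recip_increment_bounds[OF \<sigma>_pos \<sigma>_pos l ba h]
  have "1 / (2 * sqrt Lmax) \<le> 1 / (2 * ?l)" using Lk_bnd l by (simp add: frac_le)
  then show "1 / (2 * sqrt Lmax) \<le> 1 / ?b - 1 / ?a" using bounds(1) by linarith
  have "1 / ?l \<le> 1 / sqrt Lmin" using Lk_bnd Lmin_pos by (simp add: frac_le)
  then show "1 / ?b - 1 / ?a \<le> 1 / sqrt Lmin" using bounds(2) by linarith
qed

lemma alpha_sqrt_Lk_bounds:
  "(real k + 1) / (2 * sqrt Lmax) \<le> 1 / (\<alpha> k * sqrt (Lk k))"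
  "1 / (\<alpha> k * sqrt (Lk k)) \<le> (real k + 1) / sqrt Lmin"
proof (induction k)
  case 0
  have "1 / (2 * sqrt Lmax) \<le> 1 / sqrt Lmax" using Lmax_pos by (simp add: frac_le)
  also have "\<dots> \<le> 1 / sqrt (Lk 0)" using Lk_bnd Lk_pos by (simp add: frac_le)
  finally show "(real 0 + 1) / (2 * sqrt Lmax) \<le> 1 / (\<alpha> 0 * sqrt (Lk 0))" using \<alpha>0 by simp
  show "1 / (\<alpha> 0 * sqrt (Lk 0)) \<le> (real 0 + 1) / sqrt Lmin"
    using Lk_bnd Lmin_pos \<alpha>0 by (simp add: frac_le)
next
  case (Suc k)
  then show "(real (Suc k) + 1) / (2 * sqrt Lmax) \<le> 1 / (\<alpha> (Suc k) * sqrt (Lk (Suc k)))"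
    and "1 / (\<alpha> (Suc k) * sqrt (Lk (Suc k))) \<le> (real (Suc k) + 1) / sqrt Lmin"
    using recip_sigma_increment[of k] by (simp_all add: add_divide_distrib)
qed

lemma weight_le: "weight k \<le> 4 * Lmax / (real k + 1)^2"
proof -
  have "\<alpha> k * sqrt (Lk k) \<le> 2 * sqrt Lmax / (real k + 1)"
    using alpha_sqrt_Lk_bounds(1)[of k] \<alpha>_pos[of k] Lk_pos[of k] Lmax_pos
    by (simp add: field_simps)
  then have "(\<alpha> k * sqrt (Lk k))^2 \<le> (2 * sqrt Lmax / (real k + 1))^2"
    using \<alpha>_pos[of k] Lk_pos[of k] by (simp add: power_mono)
  then show ?thesis
    unfolding weight_def using Lk_pos[of k] Lmax_pos
    by (simp add: power_divide power_mult_distrib mult.commute)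
qed

lemma weight_ge: "Lmin / (real k + 1)^2 \<le> weight k"
proof -
  have "sqrt Lmin / (real k + 1) \<le> \<alpha> k * sqrt (Lk k)"
    using alpha_sqrt_Lk_bounds(2)[of k] \<alpha>_pos[of k] Lk_pos[of k] Lmin_pos
    by (simp add: field_simps)
  then have "(sqrt Lmin / (real k + 1))^2 \<le> (\<alpha> k * sqrt (Lk k))^2"
    using Lmin_pos by (intro power_mono) auto
  then show ?thesis
    unfolding weight_def using Lk_pos[of k] Lmin_pos
    by (simp add: power_divide power_mult_distrib mult.commute)
qed

lemma alpha_le: "\<alpha> k \<le> 2 * sqrt (Lmax / Lmin) / (real k + 1)"
proof -
  have "\<alpha> k * sqrt (Lk k) \<le> 2 * sqrt Lmax / (real k + 1)"
    using alpha_sqrt_Lk_bounds(1)[of k] \<alpha>_pos[of k] Lk_pos[of k] Lmax_pos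
    by (simp add: field_simps)
  moreover have "\<alpha> k * sqrt Lmin \<le> \<alpha> k * sqrt (Lk k)"
    using Lk_bnd \<alpha>_pos[of k] by (simp add: mult_left_mono)
  ultimately have "\<alpha> k * sqrt Lmin \<le> 2 * sqrt Lmax / (real k + 1)" by linarith
  then have "\<alpha> k \<le> (2 * sqrt Lmax / (real k + 1)) / sqrt Lmin"
    using Lmin_pos by (simp add: pos_le_divide_eq ac_simps)
  then show ?thesis by (simp add: real_sqrt_divide mult.commute)
qed

end

section \<open>Counting oracle calls\<close>

lemma geometric_le_of_ln_ratio_le:
  fixes r D X :: real
  assumes r: "0 < r" "r < 1" and D: "D > 0" and X: "X > 0" and j: "ln (D / X) / ln (1 / r) \<le> real j"
  shows "D * r^j \<le> X"
proof -
  have "ln (D / X) \<le> real j * ln (1 / r)" using j r by (simp add: divide_le_eq)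
  then have "ln (D * r^j) \<le> ln X" using D X r by (simp add: ln_div ln_mult ln_realpow ln_inverse)
  then show ?thesis using D r X by simp
qed

lemma cost_le_of_iterations_le:
  fixes \<epsilon> h c a b S :: real and n :: nat
  assumes \<epsilon>: "0 < \<epsilon>" "\<epsilon> \<le> exp (-1)" and h: "0 < h" "h \<le> 1" and c: "c \<ge> 1"
    and n: "real n \<le> c * \<epsilon> powr (-h)" "n \<ge> 1" and ab: "a \<ge> 0" "b \<ge> 0"
    and S: "S \<le> real n * (a + b * ln (real n))"
  shows "S \<le> c * (a + b * ln c + b) * \<epsilon> powr (-h) * ln (1 / \<epsilon>)"
proof -
  have l1: "ln (1 / \<epsilon>) \<ge> 1"
    using \<epsilon> ln_le_cancel_iff[of "exp 1" "1 / \<epsilon>"] by (simp add: field_simps exp_minus)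
  have "ln (real n) \<le> ln (c * \<epsilon> powr (-h))" using n \<epsilon> c by simp
  also have "\<dots> = ln c + h * ln (1 / \<epsilon>)" using c \<epsilon> by (simp add: ln_mult ln_div)
  also have "\<dots> \<le> ln c + ln (1 / \<epsilon>)" using h l1 by (simp add: mult_left_le_one_le)
  finally have "b * ln (real n) \<le> b * ln c + b * ln (1 / \<epsilon>)"
    using ab by (simp add: mult_left_mono distrib_left[symmetric])
  moreover have "a + b * ln c \<le> (a + b * ln c) * ln (1 / \<epsilon>)"
    using mult_left_mono[OF l1, of "a + b * ln c"] ab c by simp
  ultimately have "a + b * ln (real n) \<le> (a + b * ln c + b) * ln (1 / \<epsilon>)"
    by (simp add: algebra_simps)
  moreover have "0 \<le> a + b * ln (real n)" using ab n by simp
  ultimately have "real n * (a + b * ln (real n)) \<le> (c * \<epsilon> powr (-h)) * ((a + b * ln c + b) * ln (1 / \<epsilon>))"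
    using n(1) by (intro mult_mono) auto
  then show ?thesis using S by (simp add: algebra_simps)
qed

text \<open>Stated for every constant above \<open>C\<close>, so that several such bounds can share one constant.\<close>
lemma iteration_complexity:
  fixes err cost :: "nat \<Rightarrow> real" and Q a b :: real and q :: nat
  assumes q: "q \<ge> 1" and Q: "Q \<ge> 0" and a: "a > 0" and b: "b \<ge> 0"
    and rate: "\<And>k. err k \<le> Q / (real k + 1) ^ q"
    and cost: "\<And>k. cost k \<le> (real k + 1) * (a + b * ln (real k + 1))"
  obtains C where "C > 0"
    and "\<And>C' \<epsilon>. C \<le> C' \<Longrightarrow> 0 < \<epsilon> \<Longrightarrow> \<epsilon> \<le> exp (-1) \<Longrightarrow>
           \<exists>k. err k \<le> \<epsilon> \<and> cost k \<le> C' * \<epsilon> powr (- 1 / real q) * ln (1 / \<epsilon>)"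
proof
  define c where "c = Q powr (1 / real q) + 2"
  have c: "c \<ge> 1" unfolding c_def by simp
  show "c * (a + b * ln c + b) > 0" using c a b by (simp add: add_pos_nonneg)
  fix C' \<epsilon> :: real assume C': "c * (a + b * ln c + b) \<le> C'" and \<epsilon>: "0 < \<epsilon>" "\<epsilon> \<le> exp (-1)"
  have \<epsilon>1: "\<epsilon> \<le> 1" using \<epsilon>(2) exp_le_one_iff[of "-1"] by linarith
  define R where "R = (Q / \<epsilon>) powr (1 / real q)"
  define k where "k = nat \<lceil>R\<rceil>"
  have R0: "0 \<le> R" unfolding R_def by simp
  then have R: "R \<le> real k" "real k \<le> R + 1"
    unfolding k_def by linarith+
  have "Q / \<epsilon> = R ^ q"
    unfolding R_def using q Q \<epsilon> by (simp add: powr_realpow'[symmetric] powr_powr)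
  also have "\<dots> \<le> (real k + 1) ^ q" using R R0 by (intro power_mono) auto
  finally have "Q / (real k + 1) ^ q \<le> \<epsilon>"
    using \<epsilon> by (simp add: divide_le_eq mult.commute)
  then have err: "err k \<le> \<epsilon>" using rate[of k] by linarith
  have "real (k + 1) \<le> c * \<epsilon> powr (- (1 / real q))"
  proof -
    have "1 \<le> \<epsilon> powr (- (1 / real q))"
      using \<epsilon> \<epsilon>1 by (simp add: powr_minus_divide divide_le_eq powr_le1)
    moreover have "R = Q powr (1 / real q) * \<epsilon> powr (- (1 / real q))"
      unfolding R_def using Q \<epsilon> by (simp add: powr_divide powr_minus_divide)
    ultimately show ?thesis using R unfolding c_def by (simp add: algebra_simps)
  qed
  then have "cost k \<le> c * (a + b * ln c + b) * \<epsilon> powr (- (1 / real q)) * ln (1 / \<epsilon>)"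
    using cost[of k] q a b
    by (intro cost_le_of_iterations_le[of \<epsilon> "1 / real q" c "k + 1" a b, OF \<epsilon> _ _ c])
      (auto simp: add.commute)
  also have "\<dots> \<le> C' * \<epsilon> powr (- (1 / real q)) * ln (1 / \<epsilon>)"
    using C' \<epsilon> \<epsilon>1 by (intro mult_right_mono) auto
  finally show "\<exists>k. err k \<le> \<epsilon> \<and> cost k \<le> C' * \<epsilon> powr (- 1 / real q) * ln (1 / \<epsilon>)"
    using err by auto
qed

section \<open>The inexact accelerated proximal gradient method\<close>

locale inexact_apg = momentum Lk \<alpha> Lmin Lmax
  for Lk \<alpha> :: "nat \<Rightarrow> real" and Lmin Lmax :: real +
  fixes f :: "real^'n \<Rightarrow> real" and gf :: "real^'n \<Rightarrow> real^'n" and L :: real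
    and A :: "real^'n^'m" and \<omega> :: "real^'m \<Rightarrow> real" and K\<^sub>\<omega> :: real
    and xbar :: "real^'n"
    and E0 p \<kappa>min \<tau>max :: real
    and B \<rho> \<beta> \<kappa> :: "nat \<Rightarrow> real"
    and xm1 xcm1 :: "real^'n"
    and x xc y yt :: "nat \<Rightarrow> real^'n"
    and v :: "nat \<Rightarrow> nat \<Rightarrow> real^'m" and z :: "nat \<Rightarrow> nat \<Rightarrow> real^'n"
    and \<tau> :: "nat \<Rightarrow> nat \<Rightarrow> real" and J :: "nat \<Rightarrow> nat"
    and F :: "real^'n \<Rightarrow> real" and lam :: "nat \<Rightarrow> real" and eps :: "nat \<Rightarrow> nat \<Rightarrow> real"
  assumes f_convex: "convex_on UNIV f"
    and f_grad: "\<forall>u. (f has_derivative (\<lambda>h. inner (gf u) h)) (at u)"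
    and f_smooth: "\<forall>u w. f u - f w - inner (gf w) (u - w) \<le> L / 2 * norm (u - w)^2"
    and \<omega>_convex: "convex_on UNIV \<omega>"
    and \<omega>_lip: "K\<^sub>\<omega>-lipschitz_on UNIV \<omega>"
    and F_def: "\<forall>u. F u = f u + \<omega> (A *v u)"
    and xbar_min: "\<forall>u. F xbar \<le> F u"
    and E0_pos: "E0 > 0" and p_gt: "p > 1"
    and \<rho>_nn: "\<forall>k. \<rho> k \<ge> 0"
    and Lk_def: "\<forall>k. Lk k = B k + \<rho> k"
    and \<beta>_def: "\<forall>k. \<beta> k = (\<Prod>i=1..k. max (1 - \<alpha> i) (\<alpha> i ^ 2 * Lk i / (\<alpha> (i - 1) ^ 2 * Lk (i - 1))))"
    and y0: "y 0 = \<alpha> 0 *\<^sub>R xcm1 + (1 - \<alpha> 0) *\<^sub>R xm1"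
    and ySuc: "\<forall>k. y (Suc k) = \<alpha> (Suc k) *\<^sub>R xc k + (1 - \<alpha> (Suc k)) *\<^sub>R x k"
    and lam_def: "\<forall>k. lam k = 1 / Lk k"
    and yt_def: "\<forall>k. yt k = y k - (1 / Lk k) *\<^sub>R gf (y k)"
    and v0_dom: "\<forall>k. v k 0 \<in> edom (fconj \<omega>)"
    and \<tau>_pos: "\<forall>k j. \<tau> k j > 0"
    and v_step: "\<forall>k j. v k (Suc j) \<in> prox_set (fconj \<omega>) (1 / \<tau> k j)
                   (v k j - (1 / \<tau> k j) *\<^sub>R (A *v (lam k *\<^sub>R (transpose A *v v k j) - yt k)))"
    and \<tau>_cond: "\<forall>k j. lam k / 2 * norm (transpose A *v (v k (Suc j) - v k j))^2
                    \<le> \<tau> k j / 2 * norm (v k (Suc j) - v k j)^2"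
    and z_def: "\<forall>k j. z k j = yt k - lam k *\<^sub>R (transpose A *v v k j)"
    and eps_def: "\<forall>k j. eps k j = (if k = 0 then E0
                    else E0 * \<beta> k * real k powr (- p) + \<rho> k / 2 * norm (z k j - y k)^2)"
    and J_stop: "\<forall>k. G_in A \<omega> (lam k) (yt k) (z k (J k)) (v k (J k)) \<le> ereal (eps k (J k))"
    and J_least: "\<forall>k. \<forall>j<J k. \<not> (G_in A \<omega> (lam k) (yt k) (z k j) (v k j) \<le> ereal (eps k j))"
    and x_def: "\<forall>k. x k = z k (J k)"
    and B_cond: "\<forall>k. f (x k) - f (y k) - inner (gf (y k)) (x k - y k) \<le> B k / 2 * norm (x k - y k)^2"
    and xc0: "xc 0 = xm1 + (1 / \<alpha> 0) *\<^sub>R (x 0 - xm1)"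
    and xcSuc: "\<forall>k. xc (Suc k) = x k + (1 / \<alpha> (Suc k)) *\<^sub>R (x (Suc k) - x k)"
    and QG: "\<forall>k. quad_growth (Psi_in A \<omega> (lam k) (yt k)) (\<kappa> k)"
    and \<kappa>min_pos: "\<kappa>min > 0"
    and \<kappa>_bdd: "bdd_below (range \<kappa>)"
    and \<kappa>_inf: "(INF k. \<kappa> k) > \<kappa>min"
    and \<tau>_bnd: "\<forall>k j. \<tau> k j \<le> \<tau>max"
begin

lemma lam_pos: "lam k > 0" and lam_le: "lam k \<le> 1 / Lmin"
  using lam_def Lk_pos[of k] Lk_bnd Lmin_pos by (simp_all add: frac_le)

lemma \<kappa>min_le: "\<kappa>min \<le> \<kappa> k"
  using cINF_lower[OF \<kappa>_bdd, of k] \<kappa>_inf by simp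

lemma inner_loop_dual_prox_gradient: "dual_prox_gradient A \<omega> K\<^sub>\<omega> (lam k) (\<kappa> k) (yt k) (v k) (\<tau> k)"
  using \<omega>_convex \<omega>_lip lam_pos QG \<tau>_pos v0_dom v_step \<tau>_cond by unfold_locales auto

lemma inner_gap_le_geometric:
  obtains D r where "D > 0" "0 < r" "r < 1"
    "\<And>k j. G_in A \<omega> (lam k) (yt k) (z k (Suc j)) (v k (Suc j)) \<le> ereal (D * r ^ j)"
proof -
  obtain N where N: "\<forall>d. norm (A *v (transpose A *v d)) \<le> N * norm d" "N \<ge> 0"
    using bounded_linear.nonneg_bounded[OF matrix_vector_mul_bounded_linear[of "A ** transpose A"]]
    by (metis matrix_vector_mul_assoc mult.commute)
  have \<tau>max: "\<tau>max > 0" using \<tau>_pos \<tau>_bnd by (meson less_le_trans)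
  define r where "r = sqrt (\<tau>max / (\<tau>max + \<kappa>min))"
  define D where "D = 8 * K\<^sub>\<omega>^2 * (\<tau>max + 1 / Lmin * N) + 1"
  have r: "0 < r" "r < 1" unfolding r_def using \<tau>max \<kappa>min_pos by simp_all
  have "G_in A \<omega> (lam k) (yt k) (z k (Suc j)) (v k (Suc j)) \<le> ereal (D * r ^ j)" for k j
  proof -
    have "G_in A \<omega> (lam k) (yt k) (z k (Suc j)) (v k (Suc j))
        \<le> ereal (8 * K\<^sub>\<omega>^2 * (\<tau>max + 1 / Lmin * N) * r ^ j)"
      using dual_prox_gradient.G_in_iterate_le[OF inner_loop_dual_prox_gradient,
          of k \<tau>max \<kappa>min "1 / Lmin" N j]
        \<tau>_bnd \<kappa>min_pos \<kappa>min_le lam_le N z_def unfolding r_def by simp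
    also have "\<dots> \<le> ereal (D * r ^ j)" unfolding D_def using r by simp
    finally show ?thesis .
  qed
  moreover have "D > 0" unfolding D_def using Lmin_pos N \<tau>max by (simp add: add_nonneg_pos)
  ultimately show thesis using that r by blast
qed

definition tol :: "nat \<Rightarrow> real" where
  "tol k = (if k = 0 then E0 else E0 * \<beta> k * real k powr (- p))"

lemma tol_le_eps: "tol k \<le> eps k j"
  using eps_def \<rho>_nn unfolding tol_def by simp

text \<open>By the recursion for \<open>\<alpha>\<close>, the maximum in the definition of \<open>\<beta>\<close> is always \<open>1 - \<alpha>\<^sub>i\<close>.\<close>
lemma \<beta>_eq: "\<beta> k = weight k / Lk 0"
proof (induction k)
  case 0
  then show ?case using \<beta>_def weight_0 Lk_pos[of 0] by simp
next
  case (Suc k)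
  have "max (1 - \<alpha> (Suc k)) (\<alpha> (Suc k) ^ 2 * Lk (Suc k) / (\<alpha> (Suc k - 1) ^ 2 * Lk (Suc k - 1)))
      = 1 - \<alpha> (Suc k)"
    using \<alpha>_rec[rule_format, of "Suc k"] by simp
  then have "\<beta> (Suc k) = (1 - \<alpha> (Suc k)) * \<beta> k"
    using \<beta>_def prod.nat_ivl_Suc'[of 1 k] by simp
  then show ?case unfolding Suc weight_Suc by simp
qed

lemma tol_Suc: "tol (Suc k) = weight (Suc k) * (E0 / Lk 0 * real (Suc k) powr (- p))"
  unfolding tol_def \<beta>_eq by simp

lemma tol_ge: "E0 * Lmin / Lmax * (real k + 1) powr (- (p + 2)) \<le> tol k"
proof (cases "k = 0")
  case True
  then show ?thesis unfolding tol_def using E0_pos Lk_bnd Lmax_pos Lmin_pos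
    by (simp add: field_simps) (meson Lk_bnd order_trans)
next
  case False
  have "(real k + 1) powr (- (p + 2)) = (real k + 1) powr (- p) / (real k + 1)^2"
    by (simp add: powr_add[of _ "- p" "- 2", simplified] powr_minus divide_inverse powr_numeral)
  then have "E0 * Lmin / Lmax * (real k + 1) powr (- (p + 2))
      = E0 * (Lmin / (real k + 1)^2 / Lmax) * (real k + 1) powr (- p)"
    by simp
  also have "\<dots> \<le> E0 * (weight k / Lk 0) * real k powr (- p)"
  proof (intro mult_mono mult_left_mono)
    show "Lmin / (real k + 1)^2 / Lmax \<le> weight k / Lk 0"
      using weight_ge[of k] Lk_bnd Lk_pos[of 0] Lmin_pos weight_pos[of k] by (intro frac_le) auto
    show "(real k + 1) powr (- p) \<le> real k powr (- p)"
      using False p_gt by (intro powr_mono2') auto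
  qed (use E0_pos weight_pos[of k] Lk_pos[of 0] Lmin_pos Lmax_pos in auto)
  finally show ?thesis unfolding tol_def \<beta>_eq using False by simp
qed

lemma inner_iterations_le:
  obtains a b where "a > 0" "b \<ge> 0" "\<And>k. real (J k) + 1 \<le> a + b * ln (real k + 1)"
proof -
  obtain D r where D: "D > 0" and r: "0 < r" "r < 1"
    and G: "\<And>k j. G_in A \<omega> (lam k) (yt k) (z k (Suc j)) (v k (Suc j)) \<le> ereal (D * r ^ j)"
    using inner_gap_le_geometric by blast
  define c where "c = E0 * Lmin / Lmax"
  have c: "c > 0" unfolding c_def using E0_pos Lmin_pos Lmax_pos by simp
  define lr where "lr = ln (1 / r)"
  have lr: "lr > 0" unfolding lr_def using r by simp
  have "real (J k) + 1 \<le> (3 + \<bar>ln D - ln c\<bar> / lr) + (p + 2) / lr * ln (real k + 1)" for k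
  proof -
    define X where "X = c * (real k + 1) powr (- (p + 2))"
    have X: "X > 0" unfolding X_def using c by simp
    define j where "j = nat \<lceil>ln (D / X) / lr\<rceil>"
    have "D * r ^ j \<le> X"
      by (rule geometric_le_of_ln_ratio_le[OF r D X]) (simp add: j_def lr_def[symmetric]; linarith)
    also have "\<dots> \<le> eps k (Suc j)"
      using tol_ge[of k] tol_le_eps[of k "Suc j"] unfolding X_def c_def by linarith
    finally have "J k \<le> Suc j"
      using G[of k j] J_least order_trans[of _ "ereal (D * r ^ j)"] by (meson ereal_less_eq(3) not_le)
    have "real j \<le> max 0 (ln (D / X) / lr) + 1" unfolding j_def by linarith
    moreover have "ln (D / X) = ln D - ln c + (p + 2) * ln (real k + 1)"
      unfolding X_def using D c by (simp add: ln_div ln_mult algebra_simps)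
    then have "max 0 (ln (D / X) / lr) \<le> (\<bar>ln D - ln c\<bar> + (p + 2) * ln (real k + 1)) / lr"
      using lr p_gt by (auto intro!: divide_right_mono)
    ultimately have "real j \<le> (\<bar>ln D - ln c\<bar> + (p + 2) * ln (real k + 1)) / lr + 1" by linarith
    moreover have "(p + 2) * ln (real k + 1) / lr = (p + 2) / lr * ln (real k + 1)" by simp
    ultimately show ?thesis using \<open>J k \<le> Suc j\<close> by (simp add: add_divide_distrib)
  qed
  moreover have "3 + \<bar>ln D - ln c\<bar> / lr > 0" "(p + 2) / lr \<ge> 0"
    using lr p_gt by (simp_all add: add_pos_nonneg)
  ultimately show thesis using that by blast
qed

lemma oracle_calls_le:
  obtains a b where "a > 0" "b \<ge> 0"
    "\<And>k. (\<Sum>l\<le>k. real (J l + 1)) \<le> (real k + 1) * (a + b * ln (real k + 1))"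
proof -
  obtain a b where ab: "a > 0" "b \<ge> 0" and J: "\<And>k. real (J k) + 1 \<le> a + b * ln (real k + 1)"
    using inner_iterations_le by blast
  have "(\<Sum>l\<le>k. real (J l + 1)) \<le> (\<Sum>l\<le>k. a + b * ln (real k + 1))" for k
  proof (rule sum_mono)
    fix l assume "l \<in> {..k}"
    then have "b * ln (real l + 1) \<le> b * ln (real k + 1)" using ab by (simp add: mult_left_mono)
    then show "real (J l + 1) \<le> a + b * ln (real k + 1)" using J[of l] by simp
  qed
  then show thesis using that[OF ab] by (simp add: add.commute)
qed

lemma x_inexact_prox:
  "Phi_in A \<omega> (1 / Lk k) (yt k) (x k) + norm (w - x k)^2 / (2 * (1 / Lk k))
    \<le> Phi_in A \<omega> (1 / Lk k) (yt k) w + eps k (J k)"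
  using G_in_le_imp_inexact_prox[OF lam_pos _ J_stop[rule_format, of k]] x_def z_def lam_def
  by simp

lemma outer_step:
  "F (x k) \<le> F w + Lk k / 2 * norm (w - y k)^2 - Lk k / 2 * norm (w - x k)^2 + tol k"
proof -
  have "f (x k) + \<omega> (A *v x k) \<le> f w + \<omega> (A *v w) + Lk k / 2 * norm (w - y k)^2
      - Lk k / 2 * norm (w - x k)^2 - \<rho> k / 2 * norm (x k - y k)^2 + eps k (J k)"
    using inexact_prox_grad_step[OF f_convex f_grad Lk_pos yt_def[rule_format] x_inexact_prox
        B_cond[rule_format] Lk_def[rule_format]] .
  moreover have "eps k (J k) - \<rho> k / 2 * norm (x k - y k)^2 \<le> tol k"
    using eps_def \<rho>_nn x_def unfolding tol_def by simp
  ultimately show ?thesis using F_def by simp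
qed

lemma F_convex: "convex_on UNIV F"
proof -
  have "F = (\<lambda>u. f u + \<omega> (0 + A *v u))" using F_def by auto
  then show ?thesis
    using convex_on_add[OF f_convex
        convex_on_compose_affine[OF \<omega>_convex matrix_vector_mul_linear[of A], of 0]]
    by simp
qed

text \<open>The iterates \<open>x\<^sub>k\<^sub>-\<^sub>1\<close> and \<open>x\<^sup>\<circ>\<^sub>k\<^sub>-\<^sub>1\<close> of the paper, including the initial points at \<open>k = 0\<close>.\<close>
definition x_prev :: "nat \<Rightarrow> real^'n" where
  "x_prev k = (if k = 0 then xm1 else x (k - 1))"

definition xc_prev :: "nat \<Rightarrow> real^'n" where
  "xc_prev k = (if k = 0 then xcm1 else xc (k - 1))"

lemma y_eq: "y k = \<alpha> k *\<^sub>R xc_prev k + (1 - \<alpha> k) *\<^sub>R x_prev k"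
  using y0 ySuc unfolding x_prev_def xc_prev_def by (cases k) auto

lemma x_eq: "x k = \<alpha> k *\<^sub>R xc k + (1 - \<alpha> k) *\<^sub>R x_prev k"
proof (cases k)
  case 0
  then show ?thesis using xc0 \<alpha>0 unfolding x_prev_def by simp
next
  case (Suc m)
  then have "\<alpha> k *\<^sub>R xc k = \<alpha> k *\<^sub>R x m + (\<alpha> k * (1 / \<alpha> k)) *\<^sub>R (x k - x m)"
    using xcSuc by (simp add: scaleR_add_right)
  then show ?thesis using \<alpha>_pos[of k] Suc unfolding x_prev_def by (simp add: algebra_simps)
qed

text \<open>Test \<open>outer_step\<close> with \<open>w = \<alpha>\<^sub>k x\<^sup>* + (1 - \<alpha>\<^sub>k) x\<^sub>k\<^sub>-\<^sub>1\<close>; then \<open>w - y\<^sub>k\<close> and \<open>w - x\<^sub>k\<close>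
  are \<open>\<alpha>\<^sub>k\<close> times \<open>x\<^sup>* - x\<^sup>\<circ>\<^sub>k\<^sub>-\<^sub>1\<close> and \<open>x\<^sup>* - x\<^sup>\<circ>\<^sub>k\<close>.\<close>
lemma estimate_step:
  "F (x k) - F xbar \<le> (1 - \<alpha> k) * (F (x_prev k) - F xbar)
    + weight k * (norm (xbar - xc_prev k)^2 / 2 - norm (xbar - xc k)^2 / 2) + tol k"
proof -
  define w where "w = \<alpha> k *\<^sub>R xbar + (1 - \<alpha> k) *\<^sub>R x_prev k"
  have "w - y k = \<alpha> k *\<^sub>R (xbar - xc_prev k)" unfolding w_def y_eq[of k] by (simp add: algebra_simps)
  then have wy: "Lk k / 2 * norm (w - y k)^2 = weight k * (norm (xbar - xc_prev k)^2 / 2)"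
    unfolding weight_def using \<alpha>_pos[of k] by (simp add: power_mult_distrib)
  have "w - x k = \<alpha> k *\<^sub>R (xbar - xc k)"
    unfolding w_def x_eq[of k] by (simp add: algebra_simps)
  then have wx: "Lk k / 2 * norm (w - x k)^2 = weight k * (norm (xbar - xc k)^2 / 2)"
    unfolding weight_def using \<alpha>_pos[of k] by (simp add: power_mult_distrib)
  have "F w \<le> \<alpha> k * F xbar + (1 - \<alpha> k) * F (x_prev k)"
    using convex_onD[OF F_convex, of "1 - \<alpha> k" xbar "x_prev k"] \<alpha>_pos[of k] \<alpha>_le_1[of k]
    unfolding w_def by simp
  then show ?thesis using outer_step[of k w] wy wx by (simp add: algebra_simps)
qed

definition lyapunov :: "nat \<Rightarrow> real" where
  "lyapunov k = (F (x k) - F xbar) / weight k + norm (xbar - xc k)^2 / 2"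

lemma lyapunov_0: "lyapunov 0 \<le> norm (xbar - xcm1)^2 / 2 + E0 / Lk 0"
proof -
  have "F (x 0) - F xbar \<le> Lk 0 * (norm (xbar - xcm1)^2 / 2 - norm (xbar - xc 0)^2 / 2 + E0 / Lk 0)"
    using estimate_step[of 0] weight_0 \<alpha>0 Lk_pos[of 0]
    unfolding xc_prev_def tol_def by (simp add: algebra_simps)
  then have "(F (x 0) - F xbar) / Lk 0
      \<le> norm (xbar - xcm1)^2 / 2 - norm (xbar - xc 0)^2 / 2 + E0 / Lk 0"
    using Lk_pos[of 0] by (simp add: pos_divide_le_eq mult.commute)
  then show ?thesis unfolding lyapunov_def weight_0 by simp
qed

lemma lyapunov_Suc: "lyapunov (Suc k) \<le> lyapunov k + E0 / Lk 0 * real (Suc k) powr (- p)"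
proof -
  have decay: "(1 - \<alpha> (Suc k)) * (F (x k) - F xbar) = weight (Suc k) * ((F (x k) - F xbar) / weight k)"
    using weight_Suc[of k] weight_pos[of k] by simp
  have "F (x (Suc k)) - F xbar \<le> (1 - \<alpha> (Suc k)) * (F (x k) - F xbar)
      + weight (Suc k) * (norm (xbar - xc k)^2 / 2 - norm (xbar - xc (Suc k))^2 / 2) + tol (Suc k)"
    using estimate_step[of "Suc k"] unfolding x_prev_def xc_prev_def by simp
  then have "F (x (Suc k)) - F xbar \<le> weight (Suc k) * (lyapunov k - norm (xbar - xc (Suc k))^2 / 2
      + E0 / Lk 0 * real (Suc k) powr (- p))"
    unfolding decay tol_Suc lyapunov_def by (simp add: algebra_simps)
  then have "(F (x (Suc k)) - F xbar) / weight (Suc k) \<le> lyapunov k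
      - norm (xbar - xc (Suc k))^2 / 2 + E0 / Lk 0 * real (Suc k) powr (- p)"
    using weight_pos[of "Suc k"] by (simp add: pos_divide_le_eq mult.commute)
  then show ?thesis unfolding lyapunov_def[of "Suc k"] by simp
qed

definition M0 :: real where
  "M0 = norm (xbar - xcm1)^2 / 2 + E0 / Lk 0 * (1 + (\<Sum>n. real n powr (- p)))"

lemma summable_powr_p: "summable (\<lambda>n. real n powr (- p))"
  using summable_real_powr_iff[of "- p"] p_gt by simp

lemma M0_pos: "M0 > 0"
proof -
  have "0 \<le> (\<Sum>n. real n powr (- p))" using summable_powr_p by (simp add: suminf_nonneg)
  then show ?thesis unfolding M0_def using E0_pos Lk_pos[of 0] by (simp add: add_nonneg_pos)
qed

lemma lyapunov_le: "lyapunov k \<le> M0"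
proof -
  have "lyapunov k \<le> norm (xbar - xcm1)^2 / 2 + E0 / Lk 0 * (1 + (\<Sum>i=1..k. real i powr (- p)))"
  proof (induction k)
    case 0
    then show ?case using lyapunov_0 by simp
  next
    case (Suc k)
    then show ?case using lyapunov_Suc[of k] by (simp add: sum.nat_ivl_Suc' algebra_simps)
  qed
  also have "\<dots> \<le> M0"
    unfolding M0_def using sum_le_suminf[OF summable_powr_p, of "{1..k}"] E0_pos Lk_pos[of 0]
    by (intro add_left_mono mult_left_mono) auto
  finally show ?thesis .
qed

lemma objective_gap_le: "F (x k) - F xbar \<le> 4 * Lmax * M0 / (real k + 1)^2"
proof -
  have "(F (x k) - F xbar) / weight k \<le> M0"
    using lyapunov_le[of k] unfolding lyapunov_def by (smt (verit) zero_le_divide_iff zero_le_power2)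
  then have "F (x k) - F xbar \<le> weight k * M0"
    using weight_pos[of k] by (simp add: divide_le_eq mult.commute)
  also have "\<dots> \<le> 4 * Lmax / (real k + 1)^2 * M0"
    using weight_le[of k] M0_pos by (intro mult_right_mono) auto
  finally show ?thesis by simp
qed

lemma norm_xbar_xc_le: "norm (xbar - xc k) \<le> sqrt (2 * M0)"
proof -
  have "0 \<le> (F (x k) - F xbar) / weight k" using xbar_min weight_pos[of k] by simp
  then show ?thesis using lyapunov_le[of k] unfolding lyapunov_def by (intro real_le_rsqrt) simp
qed

lemma norm_xbar_xc_prev_le: "norm (xbar - xc_prev k) \<le> sqrt (2 * M0)"
proof (cases k)
  case 0
  have "0 \<le> E0 / Lk 0 * (1 + (\<Sum>n. real n powr (- p)))"
    using E0_pos Lk_pos[of 0] summable_powr_p by (simp add: suminf_nonneg)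
  then show ?thesis using 0 unfolding xc_prev_def M0_def by (intro real_le_rsqrt) simp
qed (simp add: xc_prev_def norm_xbar_xc_le)

lemma norm_x_minus_y_le: "norm (x k - y k) \<le> \<alpha> k * (2 * sqrt (2 * M0))"
proof -
  have "x k - y k = \<alpha> k *\<^sub>R ((xbar - xc_prev k) - (xbar - xc k))"
    unfolding x_eq[of k] y_eq[of k] by (simp add: algebra_simps)
  then have "norm (x k - y k) \<le> \<alpha> k * (norm (xbar - xc_prev k) + norm (xbar - xc k))"
    using \<alpha>_pos[of k] norm_triangle_ineq4[of "xbar - xc_prev k" "xbar - xc k"]
    by (simp add: mult_left_mono del: norm_minus_cancel)
  also have "\<dots> \<le> \<alpha> k * (2 * sqrt (2 * M0))"
    using norm_xbar_xc_le[of k] norm_xbar_xc_prev_le[of k] \<alpha>_pos[of k] by (intro mult_left_mono) auto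
  finally show ?thesis .
qed

lemma eps_subgradient: "gf (x k) + Lk k *\<^sub>R (yt k - x k) \<in> eps_subdiff F (eps k (J k)) (x k)"
  unfolding eps_subdiff_def
proof (intro CollectI allI)
  fix u
  have "\<omega> (A *v x k) + Lk k * inner (yt k - x k) (u - x k) - eps k (J k) \<le> \<omega> (A *v u)"
    by (rule inexact_prox_subgradient[OF Lk_pos x_inexact_prox])
  moreover have "f (x k) + inner (gf (x k)) (u - x k) \<le> f u"
    by (rule convex_gradient_inequality[OF f_convex f_grad])
  ultimately show "inner (gf (x k) + Lk k *\<^sub>R (yt k - x k)) (u - x k) \<le> F u - F (x k) + eps k (J k)"
    using F_def by (simp add: inner_add_left)
qed

lemma subdiff_dist_le:
  "infdist 0 (eps_subdiff F (eps k (J k)) (x k))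
    \<le> (max L 1 + Lmax) * (2 * sqrt (2 * M0)) * (2 * sqrt (Lmax / Lmin)) / (real k + 1)"
proof -
  define L1 where "L1 = max L 1"
  have L1: "L1 > 0" unfolding L1_def by simp
  have smooth1: "\<forall>u w. f u - f w - inner (gf w) (u - w) \<le> L1 / 2 * norm (u - w)^2"
  proof (intro allI)
    fix u w :: "real^'n"
    have "L / 2 * norm (u - w)^2 \<le> L1 / 2 * norm (u - w)^2"
      unfolding L1_def by (intro mult_right_mono) auto
    then show "f u - f w - inner (gf w) (u - w) \<le> L1 / 2 * norm (u - w)^2"
      using f_smooth[rule_format, of u w] by linarith
  qed
  have "Lk k *\<^sub>R (yt k - x k) = Lk k *\<^sub>R (y k - x k) - gf (y k)"
    unfolding yt_def[rule_format] using Lk_pos[of k] by (simp add: algebra_simps)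
  then have "gf (x k) + Lk k *\<^sub>R (yt k - x k) = (gf (x k) - gf (y k)) + Lk k *\<^sub>R (y k - x k)"
    by simp
  then have "norm (gf (x k) + Lk k *\<^sub>R (yt k - x k))
      \<le> norm (gf (x k) - gf (y k)) + norm (Lk k *\<^sub>R (y k - x k))"
    by (simp only: norm_triangle_ineq)
  also have "\<dots> \<le> L1 * norm (x k - y k) + Lmax * norm (x k - y k)"
    using smooth_convex_gradient_lipschitz[OF f_convex f_grad smooth1 L1] Lk_bnd Lk_pos[of k]
    by (intro add_mono) (auto simp: norm_minus_commute mult_right_mono)
  also have "\<dots> \<le> (L1 + Lmax) * (\<alpha> k * (2 * sqrt (2 * M0)))"
    using norm_x_minus_y_le[of k] L1 Lmax_pos by (simp add: distrib_right[symmetric] mult_left_mono)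
  also have "\<dots> \<le> (L1 + Lmax) * ((2 * sqrt (Lmax / Lmin) / (real k + 1)) * (2 * sqrt (2 * M0)))"
    using alpha_le[of k] L1 Lmax_pos M0_pos by (intro mult_left_mono mult_right_mono) auto
  also have "\<dots> = (L1 + Lmax) * (2 * sqrt (2 * M0)) * (2 * sqrt (Lmax / Lmin)) / (real k + 1)"
    by simp
  finally have "norm (gf (x k) + Lk k *\<^sub>R (yt k - x k))
      \<le> (L1 + Lmax) * (2 * sqrt (2 * M0)) * (2 * sqrt (Lmax / Lmin)) / (real k + 1)" .
  then show ?thesis
    using infdist_le[OF eps_subgradient[of k], of 0] unfolding L1_def by simp
qed

end

theorem corollary5p4:
  fixes f :: "real^'n \<Rightarrow> real" and gf :: "real^'n \<Rightarrow> real^'n" and L :: real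
    and A :: "real^'n^'m" and \<omega> :: "real^'m \<Rightarrow> real" and K\<^sub>\<omega> :: real
    and xbar :: "real^'n"
    and E0 p Lmin Lmax \<kappa>min \<tau>max :: real
    and B \<rho> Lk \<alpha> \<beta> \<kappa> :: "nat \<Rightarrow> real"
    and xm1 xcm1 :: "real^'n"
    and x xc y yt :: "nat \<Rightarrow> real^'n"
    and v :: "nat \<Rightarrow> nat \<Rightarrow> real^'m" and z :: "nat \<Rightarrow> nat \<Rightarrow> real^'n"
    and \<tau> :: "nat \<Rightarrow> nat \<Rightarrow> real" and J :: "nat \<Rightarrow> nat"
    and F :: "real^'n \<Rightarrow> real" and lam :: "nat \<Rightarrow> real" and eps :: "nat \<Rightarrow> nat \<Rightarrow> real"
  assumes f_convex: "convex_on UNIV f"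
    and f_grad: "\<forall>u. (f has_derivative (\<lambda>h. inner (gf u) h)) (at u)"
    and f_smooth: "\<forall>u w. f u - f w - inner (gf w) (u - w) \<le> L / 2 * norm (u - w)^2"
    and \<omega>_convex: "convex_on UNIV \<omega>"
    and \<omega>_lip: "K\<^sub>\<omega>-lipschitz_on UNIV \<omega>"
    and F_def: "\<forall>u. F u = f u + \<omega> (A *v u)"
    and xbar_min: "\<forall>u. F xbar \<le> F u"
    and E0_pos: "E0 > 0" and p_gt: "p > 1"
    and B_pos: "\<forall>k. B k > 0" and \<rho>_nn: "\<forall>k. \<rho> k \<ge> 0"
    and Lk_def: "\<forall>k. Lk k = B k + \<rho> k"
    and Lmin_pos: "0 < Lmin" and Lmin_le: "Lmin \<le> Lmax"
    and Lk_bnd: "\<forall>k. Lmin \<le> Lk k \<and> Lk k \<le> Lmax"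
    and \<alpha>0: "\<alpha> 0 = 1"
    and \<alpha>_rng: "\<forall>k\<ge>1. 0 < \<alpha> k \<and> \<alpha> k \<le> 1"
    and \<alpha>_rec: "\<forall>k\<ge>1. 1 - \<alpha> k = \<alpha> k ^ 2 * Lk k / (\<alpha> (k - 1) ^ 2 * Lk (k - 1))"
    and \<beta>_def: "\<forall>k. \<beta> k = (\<Prod>i=1..k. max (1 - \<alpha> i) (\<alpha> i ^ 2 * Lk i / (\<alpha> (i - 1) ^ 2 * Lk (i - 1))))"
    and y0: "y 0 = \<alpha> 0 *\<^sub>R xcm1 + (1 - \<alpha> 0) *\<^sub>R xm1"
    and ySuc: "\<forall>k. y (Suc k) = \<alpha> (Suc k) *\<^sub>R xc k + (1 - \<alpha> (Suc k)) *\<^sub>R x k"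
    and lam_def: "\<forall>k. lam k = 1 / Lk k"
    and yt_def: "\<forall>k. yt k = y k - (1 / Lk k) *\<^sub>R gf (y k)"
    and v0_dom: "\<forall>k. v k 0 \<in> edom (fconj \<omega>)"
    and \<tau>_pos: "\<forall>k j. \<tau> k j > 0"
    and v_step: "\<forall>k j. v k (Suc j) \<in> prox_set (fconj \<omega>) (1 / \<tau> k j)
                   (v k j - (1 / \<tau> k j) *\<^sub>R (A *v (lam k *\<^sub>R (transpose A *v v k j) - yt k)))"
    and \<tau>_cond: "\<forall>k j. lam k / 2 * norm (transpose A *v (v k (Suc j) - v k j))^2
                    \<le> \<tau> k j / 2 * norm (v k (Suc j) - v k j)^2"
    and z_def: "\<forall>k j. z k j = yt k - lam k *\<^sub>R (transpose A *v v k j)"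
    and eps_def: "\<forall>k j. eps k j = (if k = 0 then E0
                    else E0 * \<beta> k * real k powr (- p) + \<rho> k / 2 * norm (z k j - y k)^2)"
    and J_stop: "\<forall>k. G_in A \<omega> (lam k) (yt k) (z k (J k)) (v k (J k)) \<le> ereal (eps k (J k))"
    and J_least: "\<forall>k. \<forall>j<J k. \<not> (G_in A \<omega> (lam k) (yt k) (z k j) (v k j) \<le> ereal (eps k j))"
    and x_def: "\<forall>k. x k = z k (J k)"
    and B_cond: "\<forall>k. f (x k) - f (y k) - inner (gf (y k)) (x k - y k) \<le> B k / 2 * norm (x k - y k)^2"
    and xc0: "xc 0 = xm1 + (1 / \<alpha> 0) *\<^sub>R (x 0 - xm1)"
    and xcSuc: "\<forall>k. xc (Suc k) = x k + (1 / \<alpha> (Suc k)) *\<^sub>R (x (Suc k) - x k)"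
    and QG: "\<forall>k. quad_growth (Psi_in A \<omega> (lam k) (yt k)) (\<kappa> k)"
    and \<kappa>min_pos: "\<kappa>min > 0"
    and \<kappa>_bdd: "bdd_below (range \<kappa>)"
    and \<kappa>_inf: "(INF k. \<kappa> k) > \<kappa>min"
    and \<tau>_bnd: "\<forall>k j. \<tau> k j \<le> \<tau>max"
  shows "\<exists>C>0. \<exists>\<epsilon>1>0. \<forall>\<epsilon>. 0 < \<epsilon> \<and> \<epsilon> \<le> \<epsilon>1 \<longrightarrow>
           (\<exists>k. F (x k) - F xbar \<le> \<epsilon> \<and>
                (\<Sum>l\<le>k. real (J l + 1)) \<le> C * \<epsilon> powr (- 1 / 2) * ln (1 / \<epsilon>)) \<and>
           (\<exists>k. infdist 0 (eps_subdiff F (eps k (J k)) (x k)) \<le> \<epsilon> \<and>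
                (\<Sum>l\<le>k. real (J l + 1)) \<le> C * \<epsilon> powr (- 1) * ln (1 / \<epsilon>))"
proof -
  interpret inexact_apg Lk \<alpha> Lmin Lmax f gf L A \<omega> K\<^sub>\<omega> xbar E0 p \<kappa>min \<tau>max B \<rho> \<beta> \<kappa>
    xm1 xcm1 x xc y yt v z \<tau> J F lam eps
    by unfold_locales (fact assms)+
  define calls where "calls k = (\<Sum>l\<le>k. real (J l + 1))" for k
  obtain a b where ab: "a > 0" "b \<ge> 0"
    and calls: "\<And>k. calls k \<le> (real k + 1) * (a + b * ln (real k + 1))"
    using oracle_calls_le unfolding calls_def by blast
  obtain C1 where C1: "C1 > 0" and gap: "\<And>C \<epsilon>. C1 \<le> C \<Longrightarrow> 0 < \<epsilon> \<Longrightarrow> \<epsilon> \<le> exp (-1) \<Longrightarrow>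
      \<exists>k. F (x k) - F xbar \<le> \<epsilon> \<and> calls k \<le> C * \<epsilon> powr (- 1 / real 2) * ln (1 / \<epsilon>)"
    using iteration_complexity[where q = 2 and Q = "4 * Lmax * M0", OF _ _ ab objective_gap_le calls]
      Lmax_pos M0_pos by auto
  obtain C2 where "C2 > 0" and dist: "\<And>C \<epsilon>. C2 \<le> C \<Longrightarrow> 0 < \<epsilon> \<Longrightarrow> \<epsilon> \<le> exp (-1) \<Longrightarrow>
      \<exists>k. infdist 0 (eps_subdiff F (eps k (J k)) (x k)) \<le> \<epsilon>
        \<and> calls k \<le> C * \<epsilon> powr (- 1 / real 1) * ln (1 / \<epsilon>)"
    using iteration_complexity[where q = 1
        and err = "\<lambda>k. infdist 0 (eps_subdiff F (eps k (J k)) (x k))"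
        and Q = "(max L 1 + Lmax) * (2 * sqrt (2 * M0)) * (2 * sqrt (Lmax / Lmin))",
        OF _ _ ab _ calls]
      subdiff_dist_le Lmax_pos Lmin_pos M0_pos
    by auto
  show ?thesis
    using gap[of "max C1 C2"] dist[of "max C1 C2"] C1 unfolding calls_def
    by (intro exI[of _ "max C1 C2"] conjI exI[of _ "exp (-1)"] allI impI) auto
qed

end
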